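(* Let $(V_1,V_2)$ be a pair of commuting isometries on a Hilbert space $\mathcal H$ and $V=V_1V_2$. Then the following are equivalent: (a) $\operatorname{ran}V_1=\operatorname{ran}V_2$; (b) $V_1(\ker V_2^* )=V_2(\ker V_1^* )$; (c) the defect operator $C(V_1,V_2)$ is a difference $P_1-P_2$ of two mutually orthogonal projections $P_1,P_2$ with $\operatorname{ran}P_1\oplus\operatorname{ran}P_2=\ker V^*$; (d) the fringe operators $F_1$ and $F_2$ are zero; (e) if $(\mathcal E,P,U)$ is the BCL triple for $(V_1,V_2)$, then $U(\operatorname{ran}P)=\operatorname{ran}P^\perp$ (equivalently $U(\operatorname{ran}P^\perp)=\operatorname{ran}P$).
   Context: Defect operator: $C(V_1,V_2)=I-V_1V_1^*-V_2V_2^*+V_1V_2V_2^*V_1^*$. Fringe operators: $F_1:\ker V_1^*\to\ker V_1^*$, $F_1x=P_{\ker V_1^*}V_2x$, and $F_2:\ker V_2^*\to\ker V_2^*$, $F_2x=P_{\ker V_2^*}V_1x$. Given a Hilbert space $\mathcal E$, projection $P$ and unitary $U$ on $\mathcal E$, set $P^\perp=I-P$, $\varphi_1(z)=U^*(P^\perp+zP)$, $\varphi_2(z)=(P+zP^\perp)U$. Berger–Coburn–Lebow theorem: for commuting isometries $(V_1,V_2)$ on $\mathcal H$, $\mathcal H=\mathcal H_p\oplus\mathcal H_u$ (jointly reducing), $V_i|_{\mathcal H_u}$ commuting unitaries, and there is a triple $(\mathcal E,P,U)$, unique up to unitary equivalence, with $(V_1|_{\mathcal H_p},V_2|_{\mathcal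 H_p})$ unitarily equal to the multiplication operators $(M_{\varphi_1},M_{\varphi_2})$ on the Hardy space $H^2_{\mathbb D}(\mathcal E)$ ($\mathcal E\cong\ker V^*$); this is the BCL triple. *)

theory Defs
  imports "HOL-Analysis.Analysis"
begin

text \<open>A complex Hilbert space is modelled as a real Hilbert space (real inner product,
complete) equipped with an orthogonal complex structure iJ (multiplication by the
imaginary unit). Complex scalar multiplication is then
(a + b i) x = a x + b (iJ x), and the complex inner product is determined by the real one
(its real part). Complex-linear operators are the real-linear ones commuting with iJ;
for these, the real Hilbert-space adjoint coincides with the complex adjoint, and
real-orthogonality of complex subspaces coincides with complex orthogonality.\<close>

class complex_hilbert = real_inner + complete_space +
  fixes iJ :: "'a \<Rightarrow> 'a"
  assumes iJ_add: "iJ (x + y) = iJ x + iJ y"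
    and iJ_scaleR: "iJ (r *\<^sub>R x) = r *\<^sub>R iJ x"
    and iJ_iJ: "iJ (iJ x) = - x"
    and iJ_inner: "inner (iJ x) (iJ y) = inner x y"

definition scaleC :: "complex \<Rightarrow> 'a::complex_hilbert \<Rightarrow> 'a" where
  "scaleC c x = Re c *\<^sub>R x + Im c *\<^sub>R iJ x"

definition clinear_op :: "('a::complex_hilbert \<Rightarrow> 'a) \<Rightarrow> bool" where
  "clinear_op T \<longleftrightarrow> bounded_linear T \<and> (\<forall>x. T (iJ x) = iJ (T x))"

definition isometry :: "('a::complex_hilbert \<Rightarrow> 'a) \<Rightarrow> bool" where
  "isometry V \<longleftrightarrow> clinear_op V \<and> (\<forall>x. norm (V x) = norm x)"

definition ker_op :: "('a::complex_hilbert \<Rightarrow> 'a) \<Rightarrow> 'a set" where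
  "ker_op T = {x. T x = 0}"

definition is_projection :: "('a::complex_hilbert \<Rightarrow> 'a) \<Rightarrow> bool" where
  "is_projection P \<longleftrightarrow> clinear_op P \<and> (\<forall>x. P (P x) = P x) \<and> adjoint P = P"

definition proj_onto :: "'a::complex_hilbert set \<Rightarrow> 'a \<Rightarrow> 'a" where
  "proj_onto M x = (THE y. y \<in> M \<and> (\<forall>z\<in>M. inner (x - y) z = 0))"

definition defect_op :: "('a::complex_hilbert \<Rightarrow> 'a) \<Rightarrow> ('a \<Rightarrow> 'a) \<Rightarrow> 'a \<Rightarrow> 'a" where
  "defect_op V1 V2 x = x - V1 (adjoint V1 x) - V2 (adjoint V2 x)
      + V1 (V2 (adjoint V2 (adjoint V1 x)))"

text \<open>Fringe operators F1 on ker V1*, F2 on ker V2* (given as functions; only their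
values on the respective kernels are relevant).\<close>
definition fringe1 :: "('a::complex_hilbert \<Rightarrow> 'a) \<Rightarrow> ('a \<Rightarrow> 'a) \<Rightarrow> 'a \<Rightarrow> 'a" where
  "fringe1 V1 V2 x = proj_onto (ker_op (adjoint V1)) (V2 x)"

definition fringe2 :: "('a::complex_hilbert \<Rightarrow> 'a) \<Rightarrow> ('a \<Rightarrow> 'a) \<Rightarrow> 'a \<Rightarrow> 'a" where
  "fringe2 V1 V2 x = proj_onto (ker_op (adjoint V2)) (V1 x)"

definition csubspace :: "'a::complex_hilbert set \<Rightarrow> bool" where
  "csubspace E \<longleftrightarrow> subspace E \<and> closed E \<and> (\<forall>x\<in>E. iJ x \<in> E)"

definition clinear_on :: "'a::complex_hilbert set \<Rightarrow> ('a \<Rightarrow> 'a) \<Rightarrow> bool" where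
  "clinear_on E T \<longleftrightarrow> T ` E \<subseteq> E \<and>
     (\<forall>x\<in>E. \<forall>y\<in>E. T (x + y) = T x + T y) \<and>
     (\<forall>x\<in>E. \<forall>r. T (r *\<^sub>R x) = r *\<^sub>R T x) \<and>
     (\<forall>x\<in>E. T (iJ x) = iJ (T x))"

definition proj_on :: "'a::complex_hilbert set \<Rightarrow> ('a \<Rightarrow> 'a) \<Rightarrow> bool" where
  "proj_on E P \<longleftrightarrow> clinear_on E P \<and> (\<forall>x\<in>E. P (P x) = P x) \<and>
     (\<forall>x\<in>E. \<forall>y\<in>E. inner (P x) y = inner x (P y))"

definition unitary_on :: "'a::complex_hilbert set \<Rightarrow> ('a \<Rightarrow> 'a) \<Rightarrow> bool" where
  "unitary_on E U \<longleftrightarrow> clinear_on E U \<and> U ` E = E \<and> (\<forall>x\<in>E. norm (U x) = norm x)"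

text \<open>H^2_D(E) is represented by Taylor coefficient sequences: f(z) = sum_n f_n z^n
with f_n in E and sum_n norm(f_n)^2 finite (the standard unitary identification
H^2_D(E) = l^2(N,E)).\<close>
definition hardy :: "'a::complex_hilbert set \<Rightarrow> (nat \<Rightarrow> 'a) set" where
  "hardy E = {f. (\<forall>n. f n \<in> E) \<and> summable (\<lambda>n. (norm (f n))\<^sup>2)}"

text \<open>Multiplication by the operator-valued polynomial phi(z) = A + z B on coefficient
sequences: (M_phi f)_n = A f_n + B f_(n-1), with f_(-1) = 0.\<close>
definition mult_op :: "('a \<Rightarrow> 'a) \<Rightarrow> ('a \<Rightarrow> 'a) \<Rightarrow> (nat \<Rightarrow> 'a) \<Rightarrow> nat \<Rightarrow> 'a::complex_hilbert" where
  "mult_op A B f n = A (f n) + (if n = 0 then 0 else B (f (n - 1)))"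

definition unitary_to_hardy ::
  "'a::complex_hilbert set \<Rightarrow> 'a set \<Rightarrow> ('a \<Rightarrow> nat \<Rightarrow> 'a) \<Rightarrow> bool" where
  "unitary_to_hardy Hp E W \<longleftrightarrow> W ` Hp = hardy E \<and>
     (\<forall>x\<in>Hp. \<forall>y\<in>Hp. W (x + y) = (\<lambda>n. W x n + W y n)) \<and>
     (\<forall>x\<in>Hp. \<forall>r. W (r *\<^sub>R x) = (\<lambda>n. r *\<^sub>R W x n)) \<and>
     (\<forall>x\<in>Hp. W (iJ x) = (\<lambda>n. iJ (W x n))) \<and>
     (\<forall>x\<in>Hp. (\<Sum>n. (norm (W x n))\<^sup>2) = (norm x)\<^sup>2)"

text \<open>(E,P,U) is a BCL triple for (V1,V2): there is a decomposition H = Hp (+) Hu into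
orthogonal closed subspaces jointly reducing V1, V2, with V1|Hu, V2|Hu unitaries, and
a unitary W : Hp -> H^2_D(E) with W V_i = M_phi_i W on Hp, where
phi1(z) = U*(P^perp + z P), phi2(z) = (P + z P^perp) U.
Here E is a closed subspace of the ambient space (any E is isomorphic to ker V*, a
subspace of H), P a projection on E and U a unitary on E; U* on E is the inverse
of U on E.\<close>
definition bcl_triple :: "('a::complex_hilbert \<Rightarrow> 'a) \<Rightarrow> ('a \<Rightarrow> 'a) \<Rightarrow>
    'a set \<Rightarrow> ('a \<Rightarrow> 'a) \<Rightarrow> ('a \<Rightarrow> 'a) \<Rightarrow> bool" where
  "bcl_triple V1 V2 E P U \<longleftrightarrow> csubspace E \<and> proj_on E P \<and> unitary_on E U \<and>
    (\<exists>Hp Hu W. csubspace Hp \<and> csubspace Hu \<and>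
       (\<forall>x\<in>Hp. \<forall>y\<in>Hu. inner x y = 0) \<and>
       (\<forall>z. \<exists>x\<in>Hp. \<exists>y\<in>Hu. z = x + y) \<and>
       V1 ` Hp \<subseteq> Hp \<and> V2 ` Hp \<subseteq> Hp \<and> V1 ` Hu \<subseteq> Hu \<and> V2 ` Hu \<subseteq> Hu \<and>
       adjoint V1 ` Hp \<subseteq> Hp \<and> adjoint V2 ` Hp \<subseteq> Hp \<and>
       adjoint V1 ` Hu \<subseteq> Hu \<and> adjoint V2 ` Hu \<subseteq> Hu \<and>
       V1 ` Hu = Hu \<and> V2 ` Hu = Hu \<and>
       unitary_to_hardy Hp E W \<and>
       (\<forall>x\<in>Hp. W (V1 x) =
          mult_op (\<lambda>e. inv_into E U (e - P e)) (\<lambda>e. inv_into E U (P e)) (W x)) \<and>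
       (\<forall>x\<in>Hp. W (V2 x) =
          mult_op (\<lambda>e. P (U e)) (\<lambda>e. U e - P (U e)) (W x)))"

end

theory Submission
  imports Defs
begin

text \<open>Write Qi = I - Vi Vi* for the projection onto ker Vi* and V = V1 V2. Because V1 and V2
  commute, ker V* = ker V1* + V1 (ker V2*) with V1 (ker V2*) = ran V1 \<inter> ker V*, and
  ran V2 \<subseteq> ran V1 as soon as V2 (ker V1*) \<subseteq> ran V1; as F1 = Q1 V2 on ker V1*, this gives
  (a) iff (b) iff (d).
  The defect operator is C = Q1 - V2 Q1 V2*, a difference of projections that are orthogonal
  under (a), with ranges ker V1* and V2 (ker V1*) = V1 (ker V2*). Conversely, a decomposition
  as in (c) makes C an involution on ker V*; as C is self-adjoint and agrees with Q1 on
  ker V2*, this forces ker V2* \<subseteq> ker V1*, and by symmetry the kernels, hence the ranges,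
  coincide.
  For (e): in a BCL model the zeroth Taylor coefficients of W V1 x and W V2 x, x in the pure
  part Hp, fill U* (ran P^perp) and ran P, and (a) gives V1 Hp = V2 Hp. Conversely the Wold
  decomposition of V yields the concrete BCL triple (ker V*, V2 V2*, V2 Q1 + V1*), for which
  U (ran P) = ran P^perp says exactly V1 (ker V2*) = V2 (ker V1*).\<close>

section \<open>Hilbert-space preliminaries\<close>

lemma parallelogram_law:
  fixes a b :: "'a::real_inner"
  shows "(norm (a - b))\<^sup>2 + (norm (a + b))\<^sup>2 = 2 * (norm a)\<^sup>2 + 2 * (norm b)\<^sup>2"
  by (simp add: power2_norm_eq_inner inner_diff_left inner_diff_right inner_add_left
      inner_add_right inner_commute)

lemma convex_norm_diff_bound:
  fixes M :: "'a::real_inner set"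
  assumes "convex M" "a \<in> M" "b \<in> M" "0 \<le> d" and lower: "\<And>m. m \<in> M \<Longrightarrow> d \<le> norm (x - m)"
  shows "(norm (a - b))\<^sup>2 \<le> 2 * (norm (x - a))\<^sup>2 + 2 * (norm (x - b))\<^sup>2 - 4 * d\<^sup>2"
proof -
  have "(1/2) *\<^sub>R a + (1/2) *\<^sub>R b \<in> M"
    using assms(1-3) by (rule convexD) auto
  then have "2 * d \<le> 2 * norm (x - ((1/2) *\<^sub>R a + (1/2) *\<^sub>R b))"
    using lower by simp
  also have "\<dots> = norm ((x - a) + (x - b))"
  proof -
    have "(x - a) + (x - b) = 2 *\<^sub>R (x - ((1/2) *\<^sub>R a + (1/2) *\<^sub>R b))"
      by (simp add: algebra_simps scaleR_2)
    then show ?thesis by simp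
  qed
  finally have "(2 * d)\<^sup>2 \<le> (norm ((x - a) + (x - b)))\<^sup>2"
    using \<open>0 \<le> d\<close> by (intro power_mono) auto
  moreover have "(norm ((x - a) - (x - b)))\<^sup>2 + (norm ((x - a) + (x - b)))\<^sup>2
      = 2 * (norm (x - a))\<^sup>2 + 2 * (norm (x - b))\<^sup>2"
    by (rule parallelogram_law)
  moreover have "(x - a) - (x - b) = b - a" by simp
  ultimately show ?thesis by (simp add: power_mult_distrib norm_minus_commute)
qed

lemma minimizing_sequence_Cauchy:
  fixes M :: "'a::real_inner set"
  assumes "convex M" "\<And>n. ms n \<in> M" "0 \<le> d" "\<And>m. m \<in> M \<Longrightarrow> d \<le> norm (x - m)"
    and near: "\<And>n. (norm (x - ms n))\<^sup>2 < d\<^sup>2 + inverse (Suc n)"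
  shows "Cauchy ms"
proof (rule metric_CauchyI)
  fix e :: real assume "e > 0"
  then obtain N :: nat where N: "inverse (Suc N) < e\<^sup>2 / 4"
    by (metis divide_pos_pos reals_Archimedean zero_less_numeral zero_less_power)
  have "dist (ms n) (ms k) < e" if "N \<le> n" "N \<le> k" for n k
  proof -
    have "inverse (real (Suc n)) \<le> inverse (Suc N)" "inverse (real (Suc k)) \<le> inverse (Suc N)"
      using that by (simp_all add: le_imp_inverse_le)
    then have "(norm (ms n - ms k))\<^sup>2 < e\<^sup>2"
      using convex_norm_diff_bound[OF assms(1) assms(2,2,3,4), of n k] near[of n] near[of k] N
      by linarith
    then show ?thesis
      using \<open>e > 0\<close> by (simp add: dist_norm power2_less_imp_less)
  qed
  then show "\<exists>N. \<forall>n\<ge>N. \<forall>k\<ge>N. dist (ms n) (ms k) < e" by blast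
qed

lemma closest_point_exists_complete:
  fixes M :: "'a::{real_inner,complete_space} set"
  assumes "convex M" "closed M" "M \<noteq> {}"
  obtains y where "y \<in> M" "\<And>m. m \<in> M \<Longrightarrow> norm (x - y) \<le> norm (x - m)"
proof -
  define d where "d = infdist x M"
  have d: "0 \<le> d" "\<And>m. m \<in> M \<Longrightarrow> d \<le> norm (x - m)"
    by (auto simp: d_def infdist_nonneg dist_norm intro: infdist_le[of _ M x, simplified dist_norm])
  have "\<exists>m\<in>M. (norm (x - m))\<^sup>2 < d\<^sup>2 + inverse (Suc n)" for n
  proof -
    have "d < sqrt (d\<^sup>2 + inverse (Suc n))"
      using d(1) by (simp add: real_less_rsqrt)
    moreover have "bdd_below ((\<lambda>m. dist x m) ` M)"
      by (rule bdd_belowI[of _ 0]) auto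
    ultimately obtain m where "m \<in> M" "norm (x - m) < sqrt (d\<^sup>2 + inverse (Suc n))"
      using \<open>M \<noteq> {}\<close> by (auto simp: d_def infdist_notempty cINF_less_iff dist_norm)
    then show ?thesis
      by (metis norm_ge_zero real_sqrt_less_iff real_sqrt_pow2_iff real_sqrt_unique)
  qed
  then obtain ms where ms: "\<And>n. ms n \<in> M"
    and near: "\<And>n. (norm (x - ms n))\<^sup>2 < d\<^sup>2 + inverse (Suc n)"
    by metis
  have "Cauchy ms"
    using \<open>convex M\<close> ms d near by (rule minimizing_sequence_Cauchy)
  then obtain y where y: "ms \<longlonglongrightarrow> y"
    using Cauchy_convergent_iff convergent_def by blast
  have "y \<in> M"
    using closed_sequentially[OF \<open>closed M\<close>] ms y by blast
  have "(\<lambda>n. (norm (x - ms n))\<^sup>2) \<longlonglongrightarrow> (norm (x - y))\<^sup>2"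
    by (intro tendsto_intros y)
  moreover have "(\<lambda>n. d\<^sup>2 + inverse (real (Suc n))) \<longlonglongrightarrow> d\<^sup>2"
    using tendsto_add[OF tendsto_const LIMSEQ_inverse_real_of_nat] by simp
  ultimately have "(norm (x - y))\<^sup>2 \<le> d\<^sup>2"
    using near by (intro LIMSEQ_le) (auto intro: less_imp_le)
  then have "norm (x - y) \<le> d"
    using d(1) by (simp add: power2_le_iff_abs_le)
  then show ?thesis
    using that \<open>y \<in> M\<close> d(2) by force
qed

lemma orthogonal_projection_exists:
  fixes M :: "'a::{real_inner,complete_space} set"
  assumes "subspace M" "closed M"
  obtains y where "y \<in> M" "\<And>z. z \<in> M \<Longrightarrow> inner (x - y) z = 0"
proof -
  obtain y where "y \<in> M" and closest: "\<And>m. m \<in> M \<Longrightarrow> norm (x - y) \<le> norm (x - m)"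
    using closest_point_exists_complete[OF subspace_imp_convex[OF \<open>subspace M\<close>] \<open>closed M\<close>]
      subspace_0[OF \<open>subspace M\<close>] by blast
  have "inner (x - y) z = 0" if "z \<in> M" "z \<noteq> 0" for z
  proof -
    define c where "c = inner (x - y) z"
    define t where "t = c / inner z z"
    have zz: "inner z z > 0" using \<open>z \<noteq> 0\<close> by simp
    have "y + t *\<^sub>R z \<in> M"
      using \<open>subspace M\<close> \<open>y \<in> M\<close> \<open>z \<in> M\<close> by (simp add: subspace_add subspace_mul)
    then have "(norm (x - y))\<^sup>2 \<le> (norm ((x - y) - t *\<^sub>R z))\<^sup>2"
      using closest by (simp add: power_mono algebra_simps)
    also have "\<dots> = (norm (x - y))\<^sup>2 - 2 * t * c + t * t * inner z z"
      by (simp add: power2_norm_eq_inner inner_diff_left inner_diff_right c_def inner_commute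
          algebra_simps)
    finally have "2 * t * c \<le> t * t * inner z z" by simp
    then have "c * c \<le> 0"
      using zz by (simp add: t_def field_simps power2_eq_square)
    then show ?thesis
      by (simp add: c_def flip: power2_eq_square)
  qed
  then show ?thesis
    using that \<open>y \<in> M\<close> by (metis inner_zero_right)
qed

lemma riesz_representation:
  fixes f :: "'a::{real_inner,complete_space} \<Rightarrow> real"
  assumes "bounded_linear f"
  obtains r where "\<And>x. f x = inner x r"
proof (cases "\<forall>x. f x = 0")
  case True
  then show ?thesis using that[of 0] by simp
next
  case False
  then obtain x0 where "f x0 \<noteq> 0" by blast
  interpret f: bounded_linear f by fact
  define M where "M = {x. f x = 0}"
  have "subspace M"
    unfolding M_def subspace_def by (simp add: f.add f.scaleR f.zero)
  moreover have "closed M"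
    unfolding M_def by (intro closed_Collect_eq continuous_intros f.continuous_on continuous_on_id)
  ultimately obtain y where "y \<in> M" and perp: "\<And>w. w \<in> M \<Longrightarrow> inner (x0 - y) w = 0"
    using orthogonal_projection_exists by blast
  define z where "z = x0 - y"
  have fz: "f z \<noteq> 0"
    using \<open>y \<in> M\<close> \<open>f x0 \<noteq> 0\<close> by (simp add: z_def M_def f.diff)
  then have zz: "inner z z \<noteq> 0" by auto
  have "f x = inner x ((f z / inner z z) *\<^sub>R z)" for x
  proof -
    have "inner z (x - (f x / f z) *\<^sub>R z) = 0"
      using perp[of "x - (f x / f z) *\<^sub>R z"] fz by (simp add: M_def z_def f.diff f.scaleR)
    then have "inner x z = (f x / f z) * inner z z"
      by (simp add: inner_diff_right inner_commute)
    then show ?thesis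
      using fz zz by (simp add: field_simps)
  qed
  then show ?thesis by (rule that)
qed

lemma bounded_linear_adjoint_works:
  fixes T :: "'a::{real_inner,complete_space} \<Rightarrow> 'b::real_inner"
  assumes "bounded_linear T"
  shows "inner (T x) y = inner x (adjoint T y)"
proof -
  have "\<exists>r. \<forall>x. inner (T x) y = inner x r" for y
    using riesz_representation[OF bounded_linear_compose[OF bounded_linear_inner_left assms]]
    by metis
  then have "\<exists>g. \<forall>x y. inner (T x) y = inner x (g y)"
    by metis
  then show ?thesis
    unfolding adjoint_def by (rule someI2_ex) blast
qed

lemma bounded_linear_adjoint:
  fixes T :: "'a::{real_inner,complete_space} \<Rightarrow> 'b::real_inner"
  assumes "bounded_linear T"
  shows "bounded_linear (adjoint T)"
proof -
  note adj = bounded_linear_adjoint_works[OF assms]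
  obtain K where K: "\<And>x. norm (T x) \<le> norm x * K" "K > 0"
    using bounded_linear.pos_bounded[OF assms] by blast
  have "linear (adjoint T)"
    by (rule linearI; rule vector_eq_ldot[THEN iffD1])
      (simp_all add: adj[symmetric] inner_add_right)
  moreover have "norm (adjoint T y) \<le> norm y * K" for y
  proof -
    have "(norm (adjoint T y))\<^sup>2 = inner (T (adjoint T y)) y"
      by (simp add: adj power2_norm_eq_inner)
    also have "\<dots> \<le> norm (T (adjoint T y)) * norm y" by (rule norm_cauchy_schwarz)
    also have "\<dots> \<le> norm (adjoint T y) * K * norm y" using K by (simp add: mult_right_mono)
    finally have "norm (adjoint T y) * norm (adjoint T y) \<le> norm (adjoint T y) * (norm y * K)"
      by (simp add: algebra_simps power2_eq_square)
    then show ?thesis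
      by (cases "adjoint T y = 0") (use K(2) in auto)
  qed
  ultimately show ?thesis
    by (intro bounded_linear_intro[of _ K]) (auto simp: linear_iff)
qed

lemma adjoint_eq_iff:
  fixes T :: "'a::{real_inner,complete_space} \<Rightarrow> 'b::real_inner"
  assumes "bounded_linear T"
  shows "adjoint T = S \<longleftrightarrow> (\<forall>x y. inner (T x) y = inner x (S y))"
  using adjoint_unique bounded_linear_adjoint_works[OF assms] by metis

lemma adjoint_comp:
  fixes S T :: "'a::{real_inner,complete_space} \<Rightarrow> 'a"
  assumes "bounded_linear S" "bounded_linear T"
  shows "adjoint (S \<circ> T) = adjoint T \<circ> adjoint S"
  by (rule adjoint_unique) (simp add: bounded_linear_adjoint_works assms)

lemma adjoint_adjoint_bounded:
  fixes T :: "'a::{real_inner,complete_space} \<Rightarrow> 'a"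
  assumes "bounded_linear T"
  shows "adjoint (adjoint T) = T"
  by (rule adjoint_unique) (metis bounded_linear_adjoint_works[OF assms] inner_commute)

lemma closed_orthogonal_comp:
  fixes S :: "'a::real_inner set"
  shows "closed (S\<^sup>\<bottom>)"
proof -
  have "S\<^sup>\<bottom> = (\<Inter>y\<in>S. {x. inner y x = 0})"
    by (auto simp: orthogonal_comp_def orthogonal_def)
  moreover have "closed {x. inner y x = 0}" for y :: 'a
    by (intro closed_Collect_eq continuous_intros)
  ultimately show ?thesis by auto
qed

lemma orthogonal_comp_invariant:
  fixes T :: "'a::{real_inner,complete_space} \<Rightarrow> 'a"
  assumes "bounded_linear T" "adjoint T ` S \<subseteq> S"
  shows "T ` (S\<^sup>\<bottom>) \<subseteq> S\<^sup>\<bottom>"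
proof (intro image_subsetI)
  fix x assume "x \<in> S\<^sup>\<bottom>"
  have "inner (T x) y = 0" if "y \<in> S" for y
  proof -
    have "adjoint T y \<in> S" using that assms(2) by blast
    then have "inner x (adjoint T y) = 0"
      using \<open>x \<in> S\<^sup>\<bottom>\<close> by (auto simp: orthogonal_comp_def orthogonal_def inner_commute)
    then show ?thesis by (simp add: bounded_linear_adjoint_works[OF assms(1)])
  qed
  then show "T x \<in> S\<^sup>\<bottom>"
    by (simp add: orthogonal_comp_def orthogonal_def inner_commute)
qed

subclass (in complex_hilbert) banach ..

abbreviation ker_adjoint_proj :: "('a::real_inner \<Rightarrow> 'a) \<Rightarrow> 'a \<Rightarrow> 'a" where
  "ker_adjoint_proj V x \<equiv> x - V (adjoint V x)"

lemma iJ_linear: "linear (iJ :: 'a::complex_hilbert \<Rightarrow> 'a)"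
  by (rule linearI) (simp_all add: iJ_add iJ_scaleR)

lemma iJ_simps [simp]:
  fixes x y :: "'a::complex_hilbert"
  shows "iJ (x + y) = iJ x + iJ y" "iJ (r *\<^sub>R x) = r *\<^sub>R iJ x" "iJ (iJ x) = - x"
    "iJ 0 = 0" "iJ (x - y) = iJ x - iJ y" "iJ (- x) = - iJ x"
  using iJ_add iJ_scaleR iJ_iJ linear_0[OF iJ_linear] linear_diff[OF iJ_linear]
    linear_neg[OF iJ_linear]
  by auto

lemma inner_iJ_right: "inner x (iJ y) = - inner (iJ x) (y::'a::complex_hilbert)"
  using iJ_inner[of x "iJ y"] by simp

lemma clinear_op_adjoint:
  assumes "clinear_op T"
  shows "clinear_op (adjoint T)"
proof -
  have T: "bounded_linear T" "\<And>x. T (iJ x) = iJ (T x)"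
    using assms by (auto simp: clinear_op_def)
  note adj = bounded_linear_adjoint_works[OF T(1)]
  have "adjoint T (iJ y) = iJ (adjoint T y)" for y
    by (rule vector_eq_ldot[THEN iffD1]) (metis adj inner_iJ_right T(2))
  then show ?thesis
    using bounded_linear_adjoint[OF T(1)] by (simp add: clinear_op_def)
qed

lemma clinear_op_ident: "clinear_op (\<lambda>x. x)"
  by (simp add: clinear_op_def bounded_linear_ident)

lemma clinear_op_compose:
  "clinear_op S \<Longrightarrow> clinear_op T \<Longrightarrow> clinear_op (\<lambda>x. S (T x))"
  by (simp add: clinear_op_def bounded_linear_compose)

lemma clinear_op_diff:
  "clinear_op S \<Longrightarrow> clinear_op T \<Longrightarrow> clinear_op (\<lambda>x. S x - T x)"
  by (simp add: clinear_op_def bounded_linear_sub)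

lemma is_projection_iff:
  "is_projection P \<longleftrightarrow>
     clinear_op P \<and> (\<forall>x. P (P x) = P x) \<and> (\<forall>x y. inner (P x) y = inner x (P y))"
  unfolding is_projection_def by (metis adjoint_eq_iff clinear_op_def)

lemma projection_difference_involutive:
  assumes P1: "is_projection P1" and P2: "is_projection P2" and orth: "\<And>x. P1 (P2 x) = 0"
  defines "C \<equiv> \<lambda>x. P1 x - P2 x"
  shows "C (C (P1 u + P2 v)) = P1 u + P2 v"
proof -
  interpret P1: bounded_linear P1 using P1 by (simp add: is_projection_def clinear_op_def)
  interpret P2: bounded_linear P2 using P2 by (simp add: is_projection_def clinear_op_def)
  have idem: "P1 (P1 x) = P1 x" "P2 (P2 x) = P2 x" for x
    using P1 P2 by (simp_all add: is_projection_iff)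
  have "P2 (P1 x) = 0" for x
  proof -
    have "inner (P2 (P1 x)) (P2 (P1 x)) = inner x (P1 (P2 (P2 (P1 x))))"
      using P1 P2 by (simp add: is_projection_iff)
    then show ?thesis by (simp add: orth)
  qed
  then show ?thesis
    by (simp add: C_def P1.add P1.diff P2.add P2.diff idem orth)
qed

lemma isometry_inner:
  assumes "isometry V"
  shows "inner (V x) (V y) = inner x y"
proof -
  interpret bounded_linear V using assms by (simp add: isometry_def clinear_op_def)
  have norm_V: "\<And>z. norm (V z) = norm z" using assms by (simp add: isometry_def)
  have polar: "inner a b = ((norm (a + b))\<^sup>2 - (norm (a - b))\<^sup>2) / 4" for a b :: 'a
    by (simp add: power2_norm_eq_inner inner_add_left inner_add_right inner_diff_left
        inner_diff_right inner_commute)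
  show ?thesis
    by (simp only: polar add[symmetric] diff[symmetric] norm_V)
qed

lemma isometry_adjoint_cancel:
  assumes "isometry V"
  shows "adjoint V (V x) = x"
  using assms
  by (metis bounded_linear_adjoint_works clinear_op_def isometry_def isometry_inner
      vector_eq_ldot)

lemma isometry_range_iff:
  assumes "isometry V"
  shows "y \<in> range V \<longleftrightarrow> V (adjoint V y) = y"
  using isometry_adjoint_cancel[OF assms] by (metis rangeE rangeI)

lemma isometry_range_orthogonal_ker:
  assumes "isometry V"
  shows "y \<in> range V \<longleftrightarrow> (\<forall>k\<in>ker_op (adjoint V). inner y k = 0)"
proof -
  have V: "bounded_linear V" using assms by (simp add: isometry_def clinear_op_def)
  interpret Vs: bounded_linear "adjoint V" by (rule bounded_linear_adjoint[OF V])
  note adj = bounded_linear_adjoint_works[OF V]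
  have defect_ker: "y - V (adjoint V y) \<in> ker_op (adjoint V)"
    by (simp add: ker_op_def Vs.diff isometry_adjoint_cancel[OF assms])
  show ?thesis
  proof
    assume "y \<in> range V"
    then show "\<forall>k\<in>ker_op (adjoint V). inner y k = 0"
      by (auto simp: adj ker_op_def)
  next
    assume "\<forall>k\<in>ker_op (adjoint V). inner y k = 0"
    then have "inner y (y - V (adjoint V y)) = 0"
      using defect_ker by blast
    then have "inner (y - V (adjoint V y)) (y - V (adjoint V y)) = 0"
      using defect_ker by (simp add: inner_diff_left adj ker_op_def)
    then show "y \<in> range V"
      using isometry_range_iff[OF assms] by simp
  qed
qed

lemma proj_onto_ker_adjoint:
  assumes "isometry V"
  shows "proj_onto (ker_op (adjoint V)) y = y - V (adjoint V y)"
  unfolding proj_onto_def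
proof (rule the_equality)
  have V: "bounded_linear V" using assms by (simp add: isometry_def clinear_op_def)
  interpret Vs: bounded_linear "adjoint V" by (rule bounded_linear_adjoint[OF V])
  note adj = bounded_linear_adjoint_works[OF V]
  show "y - V (adjoint V y) \<in> ker_op (adjoint V) \<and>
      (\<forall>z\<in>ker_op (adjoint V). inner (y - (y - V (adjoint V y))) z = 0)"
    by (simp add: ker_op_def adj Vs.diff isometry_adjoint_cancel[OF assms])
  fix z assume z: "z \<in> ker_op (adjoint V) \<and>
      (\<forall>w\<in>ker_op (adjoint V). inner (y - z) w = 0)"
  have k: "(y - V (adjoint V y)) - z \<in> ker_op (adjoint V)"
    using z by (simp add: ker_op_def Vs.diff isometry_adjoint_cancel[OF assms])
  then have "inner (y - z) ((y - V (adjoint V y)) - z) = 0" using z by blast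
  moreover have "inner (V (adjoint V y)) ((y - V (adjoint V y)) - z) = 0"
    using k by (simp add: adj ker_op_def)
  ultimately have "inner ((y - V (adjoint V y)) - z) ((y - V (adjoint V y)) - z) = 0"
    by (simp add: inner_diff_left inner_diff_right algebra_simps)
  then show "z = y - V (adjoint V y)" by simp
qed

lemma range_ker_adjoint_proj:
  assumes "isometry V"
  shows "range (ker_adjoint_proj V) = ker_op (adjoint V)"
proof -
  have V: "bounded_linear V" using assms by (simp add: isometry_def clinear_op_def)
  interpret V: bounded_linear V by (rule V)
  interpret Vs: bounded_linear "adjoint V" by (rule bounded_linear_adjoint[OF V])
  show ?thesis
  proof
    show "range (ker_adjoint_proj V) \<subseteq> ker_op (adjoint V)"
      by (auto simp: ker_op_def Vs.diff isometry_adjoint_cancel[OF assms])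
    show "ker_op (adjoint V) \<subseteq> range (ker_adjoint_proj V)"
    proof
      fix x assume "x \<in> ker_op (adjoint V)"
      then have "x = x - V (adjoint V x)" by (simp add: ker_op_def V.zero)
      then show "x \<in> range (ker_adjoint_proj V)" by (rule range_eqI)
    qed
  qed
qed

lemma is_projection_ker_adjoint_proj:
  assumes "isometry V"
  shows "is_projection (ker_adjoint_proj V)"
proof -
  have V: "clinear_op V" using assms by (simp add: isometry_def)
  interpret V: bounded_linear V using V by (simp add: clinear_op_def)
  interpret Vs: bounded_linear "adjoint V"
    using clinear_op_adjoint[OF V] by (simp add: clinear_op_def)
  have adj: "inner (V x) y = inner x (adjoint V y)" "inner x (V y) = inner (adjoint V x) y" for x y
    using bounded_linear_adjoint_works[OF V.bounded_linear] by (metis inner_commute)+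
  show ?thesis unfolding is_projection_iff
    by (simp add: clinear_op_diff clinear_op_ident clinear_op_compose clinear_op_adjoint V
        V.diff Vs.diff isometry_adjoint_cancel[OF assms] inner_diff_left inner_diff_right adj)
qed

lemma is_projection_isometry_conj:
  assumes "isometry V" "is_projection P"
  shows "is_projection (\<lambda>x. V (P (adjoint V x)))"
proof -
  have V: "clinear_op V" using assms by (simp add: isometry_def)
  note adj = bounded_linear_adjoint_works[OF V[unfolded clinear_op_def, THEN conjunct1]]
  have symmetric: "inner (V (P (adjoint V x))) y = inner x (V (P (adjoint V y)))" for x y
  proof -
    have "inner (V (P (adjoint V x))) y = inner (P (adjoint V x)) (adjoint V y)" by (rule adj)
    also have "\<dots> = inner (adjoint V x) (P (adjoint V y))"
      using assms(2) by (simp add: is_projection_iff)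
    also have "\<dots> = inner x (V (P (adjoint V y)))" by (metis adj inner_commute)
    finally show ?thesis .
  qed
  have "clinear_op P" using assms(2) by (simp add: is_projection_iff)
  then have "clinear_op (\<lambda>x. V (P (adjoint V x)))"
    using clinear_op_compose[OF V clinear_op_compose[of P "adjoint V"]] clinear_op_adjoint[OF V]
    by blast
  moreover have "V (P (adjoint V (V (P (adjoint V x))))) = V (P (adjoint V x))" for x
    using assms by (simp add: is_projection_iff isometry_adjoint_cancel)
  ultimately show ?thesis
    using symmetric by (simp add: is_projection_iff)
qed

lemma range_isometry_conj:
  assumes "isometry V"
  shows "range (\<lambda>x. V (P (adjoint V x))) = V ` range P"
proof
  show "V ` range P \<subseteq> range (\<lambda>x. V (P (adjoint V x)))"
  proof
    fix y assume "y \<in> V ` range P"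
    then obtain z where "y = V (P z)" by blast
    then have "y = V (P (adjoint V (V z)))"
      by (simp add: isometry_adjoint_cancel[OF assms])
    then show "y \<in> range (\<lambda>x. V (P (adjoint V x)))" by (rule range_eqI)
  qed
qed auto

lemma isometry_comp:
  assumes "isometry S" "isometry T"
  shows "isometry (S \<circ> T)"
  using assms clinear_op_compose[of S T] by (simp add: isometry_def comp_def)

lemma csubspace_ker_op:
  assumes "clinear_op T"
  shows "csubspace (ker_op T)"
proof -
  interpret T: bounded_linear T using assms by (simp add: clinear_op_def)
  have "closed {x. T x = 0}"
    by (intro closed_Collect_eq continuous_on_const linear_continuous_on T.bounded_linear)
  then show ?thesis
    using assms by (auto simp: csubspace_def subspace_def ker_op_def clinear_op_def T.add T.scaleR)
qed

section \<open>Pairs of commuting isometries\<close>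

lemma fringe2_eq_fringe1_swap: "fringe2 V1 V2 = fringe1 V2 V1"
  by (simp add: fringe1_def fringe2_def fun_eq_iff)

locale commuting_isometries =
  fixes V1 V2 :: "'a::complex_hilbert \<Rightarrow> 'a"
  assumes isometry1: "isometry V1" and isometry2: "isometry V2"
    and commute: "V1 \<circ> V2 = V2 \<circ> V1"
begin

lemma swapped: "commuting_isometries V2 V1"
  using isometry1 isometry2 commute by unfold_locales simp_all

lemma clinear_ops:
  "clinear_op V1" "clinear_op (adjoint V1)" "clinear_op V2" "clinear_op (adjoint V2)"
  using isometry1 isometry2 clinear_op_adjoint by (auto simp: isometry_def)

sublocale V1: bounded_linear V1
  using clinear_ops by (simp add: clinear_op_def)

sublocale V1_adjoint: bounded_linear "adjoint V1"
  using clinear_ops by (simp add: clinear_op_def)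

sublocale V2: bounded_linear V2
  using clinear_ops by (simp add: clinear_op_def)

sublocale V2_adjoint: bounded_linear "adjoint V2"
  using clinear_ops by (simp add: clinear_op_def)

lemmas linear_simps [simp] =
  V1.add V1.diff V1.scaleR V1.zero V1.neg
  V1_adjoint.add V1_adjoint.diff V1_adjoint.scaleR V1_adjoint.zero V1_adjoint.neg
  V2.add V2.diff V2.scaleR V2.zero V2.neg
  V2_adjoint.add V2_adjoint.diff V2_adjoint.scaleR V2_adjoint.zero V2_adjoint.neg

lemma iJ_commute [simp]:
  "V1 (iJ x) = iJ (V1 x)" "adjoint V1 (iJ x) = iJ (adjoint V1 x)"
  "V2 (iJ x) = iJ (V2 x)" "adjoint V2 (iJ x) = iJ (adjoint V2 x)"
  using clinear_ops by (simp_all add: clinear_op_def)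

lemma adjoint_cancel [simp]: "adjoint V1 (V1 x) = x" "adjoint V2 (V2 x) = x"
  by (simp_all add: isometry_adjoint_cancel isometry1 isometry2)

lemma adjoint_works:
  "inner (V1 x) y = inner x (adjoint V1 y)" "inner (V2 x) y = inner x (adjoint V2 y)"
  by (simp_all add: bounded_linear_adjoint_works V1.bounded_linear V2.bounded_linear)

lemma commute_apply: "V1 (V2 x) = V2 (V1 x)"
  using commute by (metis comp_apply)

lemma adjoint_commute: "adjoint V1 (adjoint V2 x) = adjoint V2 (adjoint V1 x)"
  by (rule vector_eq_ldot[THEN iffD1]) (simp add: adjoint_works[symmetric] commute_apply)

lemma adjoint_product: "adjoint (V1 \<circ> V2) x = adjoint V2 (adjoint V1 x)"
  by (simp add: adjoint_comp V1.bounded_linear V2.bounded_linear)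

lemma ker_adjoint_subset: "ker_op (adjoint V1) \<subseteq> ker_op (adjoint (V1 \<circ> V2))"
  by (auto simp: ker_op_def adjoint_product adjoint_commute)

lemma image_ker_adjoint: "V1 ` ker_op (adjoint V2) = range V1 \<inter> ker_op (adjoint (V1 \<circ> V2))"
  by (auto simp: ker_op_def adjoint_product)

lemma range_subset_if_image_subset:
  assumes "V2 ` ker_op (adjoint V1) \<subseteq> range V1"
  shows "range V2 \<subseteq> range V1"
proof
  fix y assume "y \<in> range V2"
  then obtain x where y: "y = V2 x" by blast
  \<comment> \<open>split x along ker V1* and ran V1; V2 maps both parts into ran V1\<close>
  have "x - V1 (adjoint V1 x) \<in> ker_op (adjoint V1)"
    by (simp add: ker_op_def)
  then obtain w where w: "V2 (x - V1 (adjoint V1 x)) = V1 w"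
    using assms by blast
  have "y = V2 (x - V1 (adjoint V1 x)) + V2 (V1 (adjoint V1 x))"
    by (simp add: y)
  also have "\<dots> = V1 w + V1 (V2 (adjoint V1 x))"
    by (simp only: w commute_apply)
  also have "\<dots> = V1 (w + V2 (adjoint V1 x))"
    by simp
  finally show "y \<in> range V1" by blast
qed

lemma range_eq_iff_images_eq:
  "range V1 = range V2 \<longleftrightarrow> V1 ` ker_op (adjoint V2) = V2 ` ker_op (adjoint V1)"
proof
  assume "range V1 = range V2"
  then show "V1 ` ker_op (adjoint V2) = V2 ` ker_op (adjoint V1)"
    using image_ker_adjoint commuting_isometries.image_ker_adjoint[OF swapped]
    by (simp add: commute)
next
  assume images: "V1 ` ker_op (adjoint V2) = V2 ` ker_op (adjoint V1)"
  have "range V2 \<subseteq> range V1"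
    using images by (intro range_subset_if_image_subset) blast
  moreover have "range V1 \<subseteq> range V2"
    using images by (intro commuting_isometries.range_subset_if_image_subset[OF swapped]) blast
  ultimately show "range V1 = range V2" by blast
qed

lemma fringe1_zero_iff:
  "(\<forall>x\<in>ker_op (adjoint V1). fringe1 V1 V2 x = 0) \<longleftrightarrow> range V2 \<subseteq> range V1"
proof -
  have "fringe1 V1 V2 x = 0 \<longleftrightarrow> V2 x \<in> range V1" for x
  proof -
    have "fringe1 V1 V2 x = V2 x - V1 (adjoint V1 (V2 x))"
      by (simp add: fringe1_def proj_onto_ker_adjoint[OF isometry1])
    then show ?thesis
      using isometry_range_iff[OF isometry1, of "V2 x"] by auto
  qed
  then have "(\<forall>x\<in>ker_op (adjoint V1). fringe1 V1 V2 x = 0) \<longleftrightarrow>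
      V2 ` ker_op (adjoint V1) \<subseteq> range V1"
    by blast
  also have "\<dots> \<longleftrightarrow> range V2 \<subseteq> range V1"
    using range_subset_if_image_subset by blast
  finally show ?thesis .
qed

end

subsection \<open>The defect operator\<close>

context commuting_isometries
begin

lemma defect_op_eq:
  "defect_op V1 V2 x = ker_adjoint_proj V1 x - V2 (ker_adjoint_proj V1 (adjoint V2 x))"
  by (simp add: defect_op_def commute_apply adjoint_commute)

lemma defect_op_swap: "defect_op V2 V1 = defect_op V1 V2"
  by (simp add: defect_op_def fun_eq_iff commute_apply adjoint_commute algebra_simps)

lemma defect_op_symmetric: "inner (defect_op V1 V2 x) y = inner x (defect_op V1 V2 y)"
  using is_projection_ker_adjoint_proj[OF isometry1]
    is_projection_isometry_conj[OF isometry2 is_projection_ker_adjoint_proj[OF isometry1]]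
  by (simp add: defect_op_eq is_projection_iff inner_diff_left inner_diff_right)

lemma ker_adjoint_product_eq_sum:
  "ker_op (adjoint (V1 \<circ> V2)) =
     {a + b | a b. a \<in> ker_op (adjoint V1) \<and> b \<in> V1 ` ker_op (adjoint V2)}"
proof
  show "ker_op (adjoint (V1 \<circ> V2)) \<subseteq>
      {a + b | a b. a \<in> ker_op (adjoint V1) \<and> b \<in> V1 ` ker_op (adjoint V2)}"
  proof
    fix x assume "x \<in> ker_op (adjoint (V1 \<circ> V2))"
    then have "adjoint V1 x \<in> ker_op (adjoint V2)"
      by (simp add: ker_op_def adjoint_product)
    moreover have "ker_adjoint_proj V1 x \<in> ker_op (adjoint V1)"
      by (simp add: ker_op_def)
    moreover have "x = ker_adjoint_proj V1 x + V1 (adjoint V1 x)"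
      by simp
    ultimately show "x \<in> {a + b | a b. a \<in> ker_op (adjoint V1) \<and> b \<in> V1 ` ker_op (adjoint V2)}"
      by blast
  qed
qed (auto simp: ker_op_def adjoint_product)

lemma defect_op_difference_of_projections:
  assumes "range V1 = range V2"
  shows "\<exists>P1 P2. is_projection P1 \<and> is_projection P2 \<and> (\<forall>x. P1 (P2 x) = 0) \<and>
           defect_op V1 V2 = (\<lambda>x. P1 x - P2 x) \<and>
           {a + b | a b. a \<in> range P1 \<and> b \<in> range P2} = ker_op (adjoint (V1 \<circ> V2))"
proof (intro exI conjI)
  let ?P2 = "\<lambda>x. V2 (ker_adjoint_proj V1 (adjoint V2 x))"
  show "is_projection (ker_adjoint_proj V1)"
    by (rule is_projection_ker_adjoint_proj[OF isometry1])
  show "is_projection ?P2"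
    by (rule is_projection_isometry_conj[OF isometry2 is_projection_ker_adjoint_proj[OF isometry1]])
  show "\<forall>x. ker_adjoint_proj V1 (?P2 x) = 0"
    using assms isometry_range_iff[OF isometry1] by (metis rangeI right_minus_eq)
  show "defect_op V1 V2 = (\<lambda>x. ker_adjoint_proj V1 x - ?P2 x)"
    by (simp add: fun_eq_iff defect_op_eq)
  have "range ?P2 = V2 ` range (ker_adjoint_proj V1)"
    by (rule range_isometry_conj[OF isometry2])
  also have "\<dots> = V1 ` ker_op (adjoint V2)"
    using range_ker_adjoint_proj[OF isometry1] range_eq_iff_images_eq assms by simp
  finally have "range ?P2 = V1 ` ker_op (adjoint V2)" .
  then show "{a + b | a b. a \<in> range (ker_adjoint_proj V1) \<and> b \<in> range ?P2} =
      ker_op (adjoint (V1 \<circ> V2))"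
    by (simp add: range_ker_adjoint_proj[OF isometry1] ker_adjoint_product_eq_sum)
qed

lemma ker_adjoint_subset_if_defect_involutive:
  assumes "\<forall>x\<in>ker_op (adjoint (V1 \<circ> V2)). defect_op V1 V2 (defect_op V1 V2 x) = x"
  shows "ker_op (adjoint V2) \<subseteq> ker_op (adjoint V1)"
proof
  fix x assume x: "x \<in> ker_op (adjoint V2)"
  \<comment> \<open>C is self-adjoint and acts as I - V1 V1* on ker V2*, so C (C x) = x forces
    norm x = norm (x - V1 (V1* x))\<close>
  then have "x \<in> ker_op (adjoint (V1 \<circ> V2))"
    using commuting_isometries.ker_adjoint_subset[OF swapped] by (auto simp: commute)
  then have "inner x x = inner (defect_op V1 V2 (defect_op V1 V2 x)) x"
    using assms by simp
  also have "\<dots> = inner (defect_op V1 V2 x) (defect_op V1 V2 x)"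
    by (simp add: defect_op_symmetric)
  also have "\<dots> = inner (ker_adjoint_proj V1 x) (ker_adjoint_proj V1 x)"
    using x by (simp add: defect_op_eq ker_op_def)
  also have "\<dots> = inner x x - inner (adjoint V1 x) (adjoint V1 x)"
  proof -
    have "inner x (V1 (adjoint V1 x)) = inner (adjoint V1 x) (adjoint V1 x)"
      by (metis adjoint_works(1) inner_commute)
    then show ?thesis
      by (simp add: inner_diff_left inner_diff_right adjoint_works inner_commute)
  qed
  finally show "x \<in> ker_op (adjoint V1)"
    by (simp add: ker_op_def)
qed

lemma range_eq_if_defect_involutive:
  assumes "\<forall>x\<in>ker_op (adjoint (V1 \<circ> V2)). defect_op V1 V2 (defect_op V1 V2 x) = x"
  shows "range V1 = range V2"
proof -
  have "ker_op (adjoint V2) \<subseteq> ker_op (adjoint V1)"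
    using assms by (rule ker_adjoint_subset_if_defect_involutive)
  moreover have "ker_op (adjoint V1) \<subseteq> ker_op (adjoint V2)"
    using assms commuting_isometries.ker_adjoint_subset_if_defect_involutive[OF swapped]
    by (simp add: defect_op_swap commute)
  ultimately show ?thesis
    using isometry_range_orthogonal_ker[OF isometry1] isometry_range_orthogonal_ker[OF isometry2]
    by blast
qed

lemma range_eq_if_defect_difference_of_projections:
  assumes "is_projection P1" "is_projection P2" "\<forall>x. P1 (P2 x) = 0"
    and defect: "defect_op V1 V2 = (\<lambda>x. P1 x - P2 x)"
    and sum: "{a + b | a b. a \<in> range P1 \<and> b \<in> range P2} = ker_op (adjoint (V1 \<circ> V2))"
  shows "range V1 = range V2"
proof (rule range_eq_if_defect_involutive, intro ballI)
  fix x assume "x \<in> ker_op (adjoint (V1 \<circ> V2))"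
  then obtain u v where "x = P1 u + P2 v"
    unfolding sum[symmetric] by blast
  then show "defect_op V1 V2 (defect_op V1 V2 x) = x"
    using projection_difference_involutive[OF assms(1-2)] assms(3) by (simp add: defect)
qed

end

section \<open>The Wold decomposition\<close>

lemma funpow_commute_apply:
  assumes "\<And>y. f (g y) = g (f y)"
  shows "(f ^^ n) (g x) = g ((f ^^ n) x)"
  by (induction n) (simp_all add: assms)

lemma bounded_linear_funpow:
  fixes f :: "'a::real_normed_vector \<Rightarrow> 'a"
  assumes "bounded_linear f"
  shows "bounded_linear (f ^^ n)"
proof (induction n)
  case 0
  then show ?case by (simp add: id_def bounded_linear_ident)
next
  case (Suc n)
  then show ?case
    using bounded_linear_compose[OF assms Suc] by (simp add: comp_def)
qed

lemma hardyD:
  "f \<in> hardy E \<Longrightarrow> f n \<in> E" "f \<in> hardy E \<Longrightarrow> summable (\<lambda>n. (norm (f n))\<^sup>2)"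
  unfolding hardy_def by auto

definition unitary_part :: "('a::real_inner \<Rightarrow> 'a) \<Rightarrow> 'a set" where
  "unitary_part V = (\<Inter>n. range (V ^^ n))"

definition pure_part :: "('a::real_inner \<Rightarrow> 'a) \<Rightarrow> 'a set" where
  "pure_part V = (unitary_part V)\<^sup>\<bottom>"

text \<open>For x in the pure part, x = (\<Sum>n. (V ^^ n) (wold_coeffs V x n)): these are the Taylor
  coefficients of x under the Wold identification of the pure part with H^2(ker V*).\<close>

definition wold_coeffs :: "('a::real_inner \<Rightarrow> 'a) \<Rightarrow> 'a \<Rightarrow> nat \<Rightarrow> 'a" where
  "wold_coeffs V x n = ker_adjoint_proj V ((adjoint V ^^ n) x)"

locale hilbert_isometry =
  fixes V :: "'a::complex_hilbert \<Rightarrow> 'a"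
  assumes isometry: "isometry V"
begin

lemma clinear_ops: "clinear_op V" "clinear_op (adjoint V)"
  using isometry clinear_op_adjoint by (auto simp: isometry_def)

lemma bounded_linear_powers:
  "bounded_linear (V ^^ n)" "bounded_linear (adjoint V ^^ n)"
  using clinear_ops by (simp_all add: clinear_op_def bounded_linear_funpow)

sublocale V: bounded_linear V
  using clinear_ops by (simp add: clinear_op_def)

sublocale V_adjoint: bounded_linear "adjoint V"
  using clinear_ops by (simp add: clinear_op_def)

lemma linear_simps [simp]:
  "(V ^^ n) (x + y) = (V ^^ n) x + (V ^^ n) y" "(V ^^ n) (x - y) = (V ^^ n) x - (V ^^ n) y"
  "(V ^^ n) (r *\<^sub>R x) = r *\<^sub>R (V ^^ n) x" "(V ^^ n) 0 = 0"
  "(adjoint V ^^ n) (x + y) = (adjoint V ^^ n) x + (adjoint V ^^ n) y"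
  "(adjoint V ^^ n) (x - y) = (adjoint V ^^ n) x - (adjoint V ^^ n) y"
  "(adjoint V ^^ n) (r *\<^sub>R x) = r *\<^sub>R (adjoint V ^^ n) x" "(adjoint V ^^ n) 0 = 0"
  by (induction n arbitrary: x y)
    (simp_all add: V.add V.diff V.scaleR V.zero V_adjoint.add V_adjoint.diff V_adjoint.scaleR
      V_adjoint.zero)

lemma iJ_commute [simp]:
  "(V ^^ n) (iJ x) = iJ ((V ^^ n) x)" "(adjoint V ^^ n) (iJ x) = iJ ((adjoint V ^^ n) x)"
  using clinear_ops by (induction n) (simp_all add: clinear_op_def)

lemma adjoint_cancel [simp]: "adjoint V (V x) = x"
  by (rule isometry_adjoint_cancel[OF isometry])

lemma adjoint_works: "inner (V x) y = inner x (adjoint V y)"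
  by (rule bounded_linear_adjoint_works[OF V.bounded_linear])

lemma power_adjoint_cancel [simp]: "(adjoint V ^^ n) ((V ^^ n) x) = x"
  by (induction n arbitrary: x) (simp_all add: funpow_swap1[of "adjoint V"])

lemma power_adjoint_works: "inner ((V ^^ n) x) y = inner x ((adjoint V ^^ n) y)"
  by (induction n arbitrary: x y) (simp_all add: adjoint_works funpow_swap1[of "adjoint V"])

lemma power_inner [simp]: "inner ((V ^^ n) x) ((V ^^ n) y) = inner x y"
  by (simp add: power_adjoint_works)

lemma norm_power [simp]: "norm ((V ^^ n) x) = norm x"
  by (simp add: norm_eq_sqrt_inner)

lemma unitary_part_iff: "x \<in> unitary_part V \<longleftrightarrow> (\<forall>n. (V ^^ n) ((adjoint V ^^ n) x) = x)"
proof -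
  have "x \<in> range (V ^^ n) \<longleftrightarrow> (V ^^ n) ((adjoint V ^^ n) x) = x" for n
  proof
    show "x \<in> range (V ^^ n) \<Longrightarrow> (V ^^ n) ((adjoint V ^^ n) x) = x" by auto
    show "(V ^^ n) ((adjoint V ^^ n) x) = x \<Longrightarrow> x \<in> range (V ^^ n)" by (metis rangeI)
  qed
  then show ?thesis
    by (simp add: unitary_part_def)
qed

lemma unitary_part_power_mem: "y \<in> unitary_part V \<Longrightarrow> \<exists>w. y = (V ^^ n) w"
  by (auto simp: unitary_part_def)

lemma csubspace_unitary_part: "csubspace (unitary_part V)"
proof -
  have "subspace (unitary_part V)"
    by (rule subspaceI) (simp_all add: unitary_part_iff)
  moreover have "closed (unitary_part V)"
  proof -
    have "closed {x. (V ^^ n) ((adjoint V ^^ n) x) = x}" for n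
      using bounded_linear_compose[OF bounded_linear_powers]
      by (intro closed_Collect_eq continuous_on_id linear_continuous_on) auto
    moreover have "unitary_part V = (\<Inter>n. {x. (V ^^ n) ((adjoint V ^^ n) x) = x})"
      by (auto simp: unitary_part_iff)
    ultimately show ?thesis
      by (simp add: closed_INT)
  qed
  moreover have "iJ x \<in> unitary_part V" if "x \<in> unitary_part V" for x
    using that by (simp add: unitary_part_iff)
  ultimately show ?thesis by (simp add: csubspace_def)
qed

lemma csubspace_pure_part: "csubspace (pure_part V)"
proof -
  have "iJ x \<in> pure_part V" if "x \<in> pure_part V" for x
  proof -
    have "inner y (iJ x) = 0" if "y \<in> unitary_part V" for y
    proof -
      have "iJ y \<in> unitary_part V"
        using csubspace_unitary_part that by (simp add: csubspace_def)
      then show ?thesis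
        using \<open>x \<in> pure_part V\<close> 
        by (auto simp: pure_part_def orthogonal_comp_def orthogonal_def inner_iJ_right)
    qed
    then show ?thesis
      by (simp add: pure_part_def orthogonal_comp_def orthogonal_def)
  qed
  then show ?thesis
    by (simp add: csubspace_def pure_part_def subspace_orthogonal_comp closed_orthogonal_comp)
qed

lemma pure_unitary_decomp: "\<exists>x\<in>pure_part V. \<exists>y\<in>unitary_part V. z = x + y"
proof -
  obtain y where "y \<in> unitary_part V" and "\<And>w. w \<in> unitary_part V \<Longrightarrow> inner (z - y) w = 0"
    using orthogonal_projection_exists csubspace_unitary_part by (metis csubspace_def)
  then have "z - y \<in> pure_part V"
    by (simp add: pure_part_def orthogonal_comp_def orthogonal_def inner_commute)
  then show ?thesis
    using \<open>y \<in> unitary_part V\<close> by (metis diff_add_cancel)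
qed

lemma pure_unitary_orthogonal: "x \<in> pure_part V \<Longrightarrow> y \<in> unitary_part V \<Longrightarrow> inner x y = 0"
  unfolding pure_part_def orthogonal_comp_def orthogonal_def by (auto simp: inner_commute)

lemma unitary_part_invariant:
  assumes "\<And>x. T (V x) = V (T x)"
  shows "T ` unitary_part V \<subseteq> unitary_part V"
proof -
  have "T ((V ^^ n) w) = (V ^^ n) (T w)" for n w
    by (rule funpow_commute_apply[symmetric]) (simp add: assms)
  then show ?thesis
    unfolding unitary_part_def by (auto simp del: funpow.simps)
qed

lemma unitary_part_adjoint_mem:
  assumes "y \<in> unitary_part V"
  shows "adjoint V y \<in> unitary_part V"
  unfolding unitary_part_def
proof
  fix n
  obtain w where "y = (V ^^ Suc n) w"
    using unitary_part_power_mem[OF assms] by blast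
  then have "adjoint V y = (V ^^ n) w" by simp
  then show "adjoint V y \<in> range (V ^^ n)" by simp
qed

lemma image_unitary_part: "V ` unitary_part V = unitary_part V"
proof
  show "V ` unitary_part V \<subseteq> unitary_part V"
    by (rule unitary_part_invariant) simp
  show "unitary_part V \<subseteq> V ` unitary_part V"
  proof
    fix y assume y: "y \<in> unitary_part V"
    then obtain w where "y = (V ^^ 1) w"
      using unitary_part_power_mem by blast
    then have "y = V (adjoint V y)" by simp
    then show "y \<in> V ` unitary_part V"
      using unitary_part_adjoint_mem[OF y] by blast
  qed
qed

lemma norm_isometry [simp]: "norm (V x) = norm x"
  using isometry by (simp add: isometry_def)

lemma norm_split_ker_adjoint_proj:
  "(norm y)\<^sup>2 = (norm (ker_adjoint_proj V y))\<^sup>2 + (norm (adjoint V y))\<^sup>2"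
proof -
  have "inner y (V (adjoint V y)) = inner (adjoint V y) (adjoint V y)"
    by (metis adjoint_works inner_commute)
  then have "inner (ker_adjoint_proj V y) (V (adjoint V y)) = 0"
    by (simp add: inner_diff_left isometry_inner[OF isometry])
  then have "(norm (ker_adjoint_proj V y + V (adjoint V y)))\<^sup>2
      = (norm (ker_adjoint_proj V y))\<^sup>2 + (norm (V (adjoint V y)))\<^sup>2"
    by (intro norm_add_Pythagorean) (simp add: orthogonal_def)
  then show ?thesis by simp
qed

lemma norm_telescope:
  "(norm x)\<^sup>2 = (\<Sum>n<N. (norm (wold_coeffs V x n))\<^sup>2) + (norm ((adjoint V ^^ N) x))\<^sup>2"
proof (induction N)
  case (Suc N)
  then show ?case
    using norm_split_ker_adjoint_proj[of "(adjoint V ^^ N) x"] by (simp add: wold_coeffs_def)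
qed simp

lemma wold_coeffs_hardy: "wold_coeffs V x \<in> hardy (ker_op (adjoint V))"
  unfolding hardy_def
proof (intro CollectI conjI allI)
  show "wold_coeffs V x n \<in> ker_op (adjoint V)" for n
    by (simp add: wold_coeffs_def ker_op_def V_adjoint.diff)
  show "summable (\<lambda>n. (norm (wold_coeffs V x n))\<^sup>2)"
  proof (rule bounded_imp_summable)
    show "(\<Sum>k\<le>n. (norm (wold_coeffs V x k))\<^sup>2) \<le> (norm x)\<^sup>2" for n
      using norm_telescope[of x "Suc n"] by (simp add: lessThan_Suc_atMost)
  qed simp
qed

lemma powers_orthogonal:
  assumes "a \<in> ker_op (adjoint V)" "b \<in> ker_op (adjoint V)" "n < m"
  shows "inner ((V ^^ n) a) ((V ^^ m) b) = 0"
proof -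
  obtain k where "m = n + Suc k"
    using less_imp_Suc_add[OF \<open>n < m\<close>] by auto
  then have "(V ^^ m) b = (V ^^ n) (V ((V ^^ k) b))"
    by (simp add: funpow_add funpow_swap1[of V])
  then have "inner ((V ^^ n) a) ((V ^^ m) b) = inner (V ((V ^^ k) b)) a"
    by (simp add: inner_commute)
  also have "\<dots> = 0"
    using assms(1) by (simp add: adjoint_works ker_op_def)
  finally show ?thesis .
qed

lemma powers_orthogonal':
  assumes "a \<in> ker_op (adjoint V)" "b \<in> ker_op (adjoint V)" "n \<noteq> m"
  shows "inner ((V ^^ n) a) ((V ^^ m) b) = 0"
proof (cases "n < m")
  case False
  then have "inner ((V ^^ m) b) ((V ^^ n) a) = 0"
    using assms by (intro powers_orthogonal) auto
  then show ?thesis by (simp add: inner_commute)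
qed (use assms powers_orthogonal in blast)

lemma ker_adjoint_proj_adjoint_power_power:
  assumes a: "a \<in> ker_op (adjoint V)"
  shows "ker_adjoint_proj V ((adjoint V ^^ m) ((V ^^ n) a)) = (if n = m then a else 0)"
proof (cases n m rule: linorder_cases)
  case less
  then obtain k where "m = Suc (n + k)"
    using less_imp_Suc_add by blast
  then have m: "m = Suc k + n" by simp
  have "(adjoint V ^^ m) ((V ^^ n) a) = (adjoint V ^^ Suc k) a"
    by (simp only: m funpow_add comp_apply power_adjoint_cancel)
  also have "\<dots> = (adjoint V ^^ k) (adjoint V a)"
    by (simp only: funpow_Suc_right comp_apply)
  finally show ?thesis
    using a less by (simp add: ker_op_def)
next
  case greater
  then obtain k where "n = Suc (m + k)"
    using less_imp_Suc_add by blast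
  then have n: "n = m + Suc k" by simp
  have "(adjoint V ^^ m) ((V ^^ n) a) = (V ^^ Suc k) a"
    by (simp only: n funpow_add comp_apply power_adjoint_cancel)
  then show ?thesis
    using greater by simp
qed (use a in \<open>simp add: ker_op_def\<close>)

lemma norm_power_sum:
  assumes f: "f \<in> hardy (ker_op (adjoint V))" and "finite I"
  shows "(norm (\<Sum>k\<in>I. (V ^^ k) (f k)))\<^sup>2 = (\<Sum>k\<in>I. (norm (f k))\<^sup>2)"
proof -
  have "pairwise (\<lambda>i j. orthogonal ((V ^^ i) (f i)) ((V ^^ j) (f j))) I"
    using powers_orthogonal'[OF hardyD(1)[OF f] hardyD(1)[OF f]]
    by (auto simp: pairwise_def orthogonal_def)
  then have "(norm (\<Sum>k\<in>I. (V ^^ k) (f k)))\<^sup>2 = (\<Sum>k\<in>I. (norm ((V ^^ k) (f k)))\<^sup>2)"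
    by (rule norm_sum_Pythagorean[OF \<open>finite I\<close>])
  then show ?thesis
    by simp
qed

lemma summable_power_series:
  assumes f: "f \<in> hardy (ker_op (adjoint V))"
  shows "summable (\<lambda>n. (V ^^ n) (f n))"
  unfolding summable_Cauchy
proof (intro allI impI)
  fix e :: real assume "e > 0"
  then obtain N where N: "\<And>m n. m \<ge> N \<Longrightarrow> norm (\<Sum>k\<in>{m..<n}. (norm (f k))\<^sup>2) < e\<^sup>2"
    using hardyD(2)[OF f] unfolding summable_Cauchy by (meson zero_less_power)
  have "norm (\<Sum>k\<in>{m..<n}. (V ^^ k) (f k)) < e" if "N \<le> m" for m n
  proof -
    have "(norm (\<Sum>k\<in>{m..<n}. (V ^^ k) (f k)))\<^sup>2 = norm (\<Sum>k\<in>{m..<n}. (norm (f k))\<^sup>2)"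
      by (simp add: norm_power_sum[OF f] sum_nonneg)
    also have "\<dots> < e\<^sup>2" using N[OF that] .
    finally show ?thesis
      using \<open>e > 0\<close> by (simp add: power2_less_imp_less)
  qed
  then show "\<exists>N. \<forall>m\<ge>N. \<forall>n. norm (\<Sum>k\<in>{m..<n}. (V ^^ k) (f k)) < e"
    by blast
qed

lemma norm_power_series:
  assumes f: "f \<in> hardy (ker_op (adjoint V))"
  shows "(norm (\<Sum>n. (V ^^ n) (f n)))\<^sup>2 = (\<Sum>n. (norm (f n))\<^sup>2)"
proof -
  have "(\<lambda>N. (norm (\<Sum>n<N. (V ^^ n) (f n)))\<^sup>2) \<longlonglongrightarrow> (norm (\<Sum>n. (V ^^ n) (f n)))\<^sup>2"
    by (intro tendsto_intros summable_LIMSEQ[OF summable_power_series[OF f]])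
  moreover have "(\<lambda>N. (norm (\<Sum>n<N. (V ^^ n) (f n)))\<^sup>2) \<longlonglongrightarrow> (\<Sum>n. (norm (f n))\<^sup>2)"
    using summable_LIMSEQ[OF hardyD(2)[OF f]] by (simp add: norm_power_sum[OF f])
  ultimately show ?thesis
    by (rule LIMSEQ_unique)
qed

lemma power_series_in_pure_part:
  assumes f: "f \<in> hardy (ker_op (adjoint V))"
  shows "(\<Sum>n. (V ^^ n) (f n)) \<in> pure_part V"
proof -
  have "inner y (\<Sum>n. (V ^^ n) (f n)) = 0" if y: "y \<in> unitary_part V" for y
  proof -
    have "inner y ((V ^^ n) (f n)) = 0" for n
    proof -
      obtain w where "y = (V ^^ Suc n) w"
        using unitary_part_power_mem[OF y] by blast
      then have "inner y ((V ^^ n) (f n)) = inner (V w) (f n)"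
        by (simp add: funpow_swap1[of V])
      then show ?thesis
        using hardyD(1)[OF f, of n] by (simp add: adjoint_works ker_op_def)
    qed
    then have "(\<lambda>n. inner y ((V ^^ n) (f n))) sums 0"
      by simp
    moreover have "(\<lambda>n. inner y ((V ^^ n) (f n))) sums inner y (\<Sum>n. (V ^^ n) (f n))"
      by (rule bounded_linear.sums[OF bounded_linear_inner_right
            summable_sums[OF summable_power_series[OF f]]])
    ultimately show ?thesis
      using sums_unique2 by blast
  qed
  then show ?thesis
    by (simp add: pure_part_def orthogonal_comp_def orthogonal_def)
qed

lemma wold_coeffs_power_series:
  assumes f: "f \<in> hardy (ker_op (adjoint V))"
  shows "wold_coeffs V (\<Sum>n. (V ^^ n) (f n)) = f"
proof
  fix m
  have "bounded_linear (\<lambda>x. wold_coeffs V x m)"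
    unfolding wold_coeffs_def
    by (intro bounded_linear_sub bounded_linear_compose[OF V.bounded_linear]
        bounded_linear_compose[OF V_adjoint.bounded_linear] bounded_linear_powers(2))
  then have "(\<lambda>n. wold_coeffs V ((V ^^ n) (f n)) m) sums wold_coeffs V (\<Sum>n. (V ^^ n) (f n)) m"
    by (rule bounded_linear.sums[OF _ summable_sums[OF summable_power_series[OF f]]])
  moreover have "(\<lambda>n. wold_coeffs V ((V ^^ n) (f n)) m) = (\<lambda>n. if n = m then f n else 0)"
    using ker_adjoint_proj_adjoint_power_power[OF hardyD(1)[OF f]] by (simp add: wold_coeffs_def)
  ultimately show "wold_coeffs V (\<Sum>n. (V ^^ n) (f n)) m = f m"
    using sums_single[of m f] sums_unique2 by fastforce
qed

lemma wold_coeffs_eq_zero_imp: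
  assumes "x \<in> pure_part V" "wold_coeffs V x = (\<lambda>n. 0)"
  shows "x = 0"
proof -
  have "(V ^^ n) ((adjoint V ^^ n) x) = x" for n
  proof (induction n)
    case (Suc n)
    have "ker_adjoint_proj V ((adjoint V ^^ n) x) = 0"
      using fun_cong[OF assms(2), of n] by (simp add: wold_coeffs_def)
    then have "V (adjoint V ((adjoint V ^^ n) x)) = (adjoint V ^^ n) x"
      by simp
    then show ?case
      using Suc.IH by (simp add: funpow_swap1[of V])
  qed simp
  then have "x \<in> unitary_part V"
    by (simp add: unitary_part_iff)
  then show "x = 0"
    using pure_unitary_orthogonal[OF assms(1)] by fastforce
qed

lemma wold_coeffs_linear [simp]:
  "wold_coeffs V (x + y) = (\<lambda>n. wold_coeffs V x n + wold_coeffs V y n)"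
  "wold_coeffs V (x - y) = (\<lambda>n. wold_coeffs V x n - wold_coeffs V y n)"
  "wold_coeffs V (r *\<^sub>R x) = (\<lambda>n. r *\<^sub>R wold_coeffs V x n)"
  "wold_coeffs V (iJ x) = (\<lambda>n. iJ (wold_coeffs V x n))"
  by (simp_all add: wold_coeffs_def fun_eq_iff V.add V.diff V.scaleR V_adjoint.add V_adjoint.diff
      V_adjoint.scaleR clinear_ops[unfolded clinear_op_def] algebra_simps)

lemma pure_part_power_series:
  assumes x: "x \<in> pure_part V"
  shows "x = (\<Sum>n. (V ^^ n) (wold_coeffs V x n))"
proof -
  define y where "y = (\<Sum>n. (V ^^ n) (wold_coeffs V x n))"
  have "y \<in> pure_part V"
    unfolding y_def by (rule power_series_in_pure_part[OF wold_coeffs_hardy])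
  then have "x - y \<in> pure_part V"
    using x csubspace_pure_part by (simp add: csubspace_def subspace_diff)
  moreover have "wold_coeffs V (x - y) = (\<lambda>n. 0)"
    unfolding y_def by (simp add: wold_coeffs_power_series[OF wold_coeffs_hardy])
  ultimately show ?thesis
    using wold_coeffs_eq_zero_imp unfolding y_def by fastforce
qed

lemma unitary_to_hardy_wold_coeffs:
  "unitary_to_hardy (pure_part V) (ker_op (adjoint V)) (wold_coeffs V)"
proof -
  have "wold_coeffs V ` pure_part V = hardy (ker_op (adjoint V))"
  proof
    show "hardy (ker_op (adjoint V)) \<subseteq> wold_coeffs V ` pure_part V"
    proof
      fix f assume f: "f \<in> hardy (ker_op (adjoint V))"
      show "f \<in> wold_coeffs V ` pure_part V"
        using wold_coeffs_power_series[OF f, symmetric] power_series_in_pure_part[OF f]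
        by (rule image_eqI)
    qed
  qed (use wold_coeffs_hardy in blast)
  moreover have "(\<Sum>n. (norm (wold_coeffs V x n))\<^sup>2) = (norm x)\<^sup>2" if "x \<in> pure_part V" for x
    using norm_power_series[OF wold_coeffs_hardy, of x] pure_part_power_series[OF that] by simp
  ultimately show ?thesis
    by (simp add: unitary_to_hardy_def)
qed

end

section \<open>BCL triples\<close>

lemma range_inter_reducing_subspace:
  assumes orth: "\<forall>x\<in>Hp. \<forall>y\<in>Hu. inner x y = 0"
    and decomp: "\<forall>z. \<exists>x\<in>Hp. \<exists>y\<in>Hu. z = x + y"
    and "subspace Hp" "T ` Hp \<subseteq> Hp" "T ` Hu \<subseteq> Hu" "\<And>x y. T (x + y) = T x + T y"
  shows "range T \<inter> Hp = T ` Hp"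
proof
  show "range T \<inter> Hp \<subseteq> T ` Hp"
  proof
    fix z assume "z \<in> range T \<inter> Hp"
    then obtain u where "T u = z" "z \<in> Hp" by blast
    obtain up uu where "up \<in> Hp" "uu \<in> Hu" "u = up + uu"
      using decomp by blast
    then have "T uu = z - T up"
      using \<open>T u = z\<close> assms(6) by (auto simp: eq_diff_eq add.commute)
    then have "T uu \<in> Hp"
      using assms(3,4) \<open>z \<in> Hp\<close> \<open>up \<in> Hp\<close> by (auto intro: subspace_diff)
    moreover have "T uu \<in> Hu"
      using assms(5) \<open>uu \<in> Hu\<close> by blast
    ultimately have "T uu = 0"
      using orth inner_eq_zero_iff by blast
    then show "z \<in> T ` Hp"
      using \<open>T uu = z - T up\<close> \<open>up \<in> Hp\<close> by force
  qed
qed (use assms(4) in blast)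

lemma unitary_to_hardy_coeff0_image:
  assumes "unitary_to_hardy Hp E W" "0 \<in> E"
  shows "(\<lambda>x. W x 0) ` Hp = E"
proof
  show "(\<lambda>x. W x 0) ` Hp \<subseteq> E"
    using assms(1) by (auto simp: unitary_to_hardy_def hardy_def)
  show "E \<subseteq> (\<lambda>x. W x 0) ` Hp"
  proof
    fix e assume "e \<in> E"
    moreover have "summable (\<lambda>n. (norm (if n = 0 then e else 0))\<^sup>2)"
      by (rule summable_finite[of "{0}"]) auto
    ultimately have "(\<lambda>n. if n = 0 then e else 0) \<in> hardy E"
      using assms(2) by (simp add: hardy_def)
    then have "(\<lambda>n. if n = 0 then e else 0) \<in> W ` Hp"
      using assms(1) by (simp add: unitary_to_hardy_def)
    then obtain x where "x \<in> Hp" "W x = (\<lambda>n. if n = 0 then e else 0)"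
      by (metis imageE)
    then show "e \<in> (\<lambda>x. W x 0) ` Hp"
      by (metis (mono_tags, lifting) image_eqI)
  qed
qed

lemma unitary_to_hardy_coeff0_mult_op:
  assumes "unitary_to_hardy Hp E W" "0 \<in> E" "\<forall>x\<in>Hp. W (T x) = mult_op A B (W x)"
  shows "(\<lambda>x. W x 0) ` T ` Hp = A ` E"
proof -
  have "(\<lambda>x. W x 0) ` T ` Hp = A ` (\<lambda>x. W x 0) ` Hp"
    unfolding image_image by (rule image_cong) (simp_all add: assms(3) mult_op_def)
  then show ?thesis
    using unitary_to_hardy_coeff0_image[OF assms(1,2)] by simp
qed

lemma bcl_triple_unitary_image_if_range_eq:
  assumes "bcl_triple V1 V2 E P U" and isometries: "isometry V1" "isometry V2"
    and "range V1 = range V2"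
  shows "U ` (P ` E) = (\<lambda>x. x - P x) ` E"
proof -
  obtain Hp Hu W where "csubspace E" "proj_on E P" "unitary_on E U" "csubspace Hp"
    and orth: "\<forall>x\<in>Hp. \<forall>y\<in>Hu. inner x y = 0" and decomp: "\<forall>z. \<exists>x\<in>Hp. \<exists>y\<in>Hu. z = x + y"
    and reducing: "V1 ` Hp \<subseteq> Hp" "V2 ` Hp \<subseteq> Hp" "V1 ` Hu \<subseteq> Hu" "V2 ` Hu \<subseteq> Hu"
    and W: "unitary_to_hardy Hp E W"
    and W1: "\<forall>x\<in>Hp. W (V1 x) =
          mult_op (\<lambda>e. inv_into E U (e - P e)) (\<lambda>e. inv_into E U (P e)) (W x)"
    and W2: "\<forall>x\<in>Hp. W (V2 x) = mult_op (\<lambda>e. P (U e)) (\<lambda>e. U e - P (U e)) (W x)"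
    using assms(1) unfolding bcl_triple_def by (elim conjE exE) (rule that, assumption+)
  have "subspace E" "subspace Hp"
    using \<open>csubspace E\<close> \<open>csubspace Hp\<close> by (simp_all add: csubspace_def)
  have UE: "U ` E = E" and PE: "P ` E \<subseteq> E"
    using \<open>unitary_on E U\<close> \<open>proj_on E P\<close> by (simp_all add: unitary_on_def proj_on_def clinear_on_def)
  have additive: "V (x + y) = V x + V y" if "isometry V" for V x y
    using that by (simp add: isometry_def clinear_op_def linear_add bounded_linear.linear)
  have "V1 ` Hp = range V1 \<inter> Hp"
    by (rule range_inter_reducing_subspace[OF orth decomp \<open>subspace Hp\<close> reducing(1,3)
          additive[OF isometries(1)], symmetric])
  also have "\<dots> = range V2 \<inter> Hp"
    using assms(4) by simp
  also have "\<dots> = V2 ` Hp"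
    by (rule range_inter_reducing_subspace[OF orth decomp \<open>subspace Hp\<close> reducing(2,4)
          additive[OF isometries(2)]])
  finally have "V1 ` Hp = V2 ` Hp" .
  \<comment> \<open>so the zeroth coefficients of W V1 x and of W V2 x, x in Hp, fill the same set\<close>
  moreover have "(\<lambda>x. W x 0) ` V1 ` Hp = (\<lambda>e. inv_into E U (e - P e)) ` E"
    by (rule unitary_to_hardy_coeff0_mult_op[OF W subspace_0[OF \<open>subspace E\<close>] W1])
  moreover have "(\<lambda>x. W x 0) ` V2 ` Hp = (\<lambda>e. P (U e)) ` E"
    by (rule unitary_to_hardy_coeff0_mult_op[OF W subspace_0[OF \<open>subspace E\<close>] W2])
  ultimately have "inv_into E U ` (\<lambda>x. x - P x) ` E = P ` U ` E"
    by (simp add: image_image)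
  moreover have "(\<lambda>x. x - P x) ` E \<subseteq> E"
    using PE \<open>subspace E\<close> by (auto intro: subspace_diff)
  ultimately show ?thesis
    using image_inv_into_cancel[OF UE] UE by metis
qed

section \<open>The BCL model of a commuting pair\<close>

context commuting_isometries
begin

sublocale product: hilbert_isometry "V1 \<circ> V2"
  by unfold_locales (rule isometry_comp[OF isometry1 isometry2])

lemma unitary_part_reducing:
  "V1 ` unitary_part (V1 \<circ> V2) \<subseteq> unitary_part (V1 \<circ> V2)"
  "V2 ` unitary_part (V1 \<circ> V2) \<subseteq> unitary_part (V1 \<circ> V2)"
  "adjoint V1 ` unitary_part (V1 \<circ> V2) \<subseteq> unitary_part (V1 \<circ> V2)"
  "adjoint V2 ` unitary_part (V1 \<circ> V2) \<subseteq> unitary_part (V1 \<circ> V2)"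
proof -
  show V1: "V1 ` unitary_part (V1 \<circ> V2) \<subseteq> unitary_part (V1 \<circ> V2)"
    by (rule product.unitary_part_invariant) (simp add: commute_apply)
  show V2: "V2 ` unitary_part (V1 \<circ> V2) \<subseteq> unitary_part (V1 \<circ> V2)"
    by (rule product.unitary_part_invariant) (simp add: commute_apply)
  \<comment> \<open>the unitary part is the image of itself under V1 V2, and V1* V1 V2 = V2, V2* V1 V2 = V1\<close>
  have "adjoint V1 ` unitary_part (V1 \<circ> V2) = V2 ` unitary_part (V1 \<circ> V2)"
    by (subst product.image_unitary_part[symmetric]) (simp add: image_image)
  then show "adjoint V1 ` unitary_part (V1 \<circ> V2) \<subseteq> unitary_part (V1 \<circ> V2)"
    using V2 by simp
  have "adjoint V2 ` unitary_part (V1 \<circ> V2) = V1 ` unitary_part (V1 \<circ> V2)"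
    by (subst product.image_unitary_part[symmetric]) (simp add: image_image commute_apply)
  then show "adjoint V2 ` unitary_part (V1 \<circ> V2) \<subseteq> unitary_part (V1 \<circ> V2)"
    using V1 by simp
qed

lemma pure_part_reducing:
  "V1 ` pure_part (V1 \<circ> V2) \<subseteq> pure_part (V1 \<circ> V2)"
  "V2 ` pure_part (V1 \<circ> V2) \<subseteq> pure_part (V1 \<circ> V2)"
  "adjoint V1 ` pure_part (V1 \<circ> V2) \<subseteq> pure_part (V1 \<circ> V2)"
  "adjoint V2 ` pure_part (V1 \<circ> V2) \<subseteq> pure_part (V1 \<circ> V2)"
  unfolding pure_part_def
  using orthogonal_comp_invariant[OF V1.bounded_linear unitary_part_reducing(3)]
    orthogonal_comp_invariant[OF V2.bounded_linear unitary_part_reducing(4)]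
    orthogonal_comp_invariant[OF V1_adjoint.bounded_linear]
    orthogonal_comp_invariant[OF V2_adjoint.bounded_linear]
    unitary_part_reducing(1,2)
  by (simp_all add: adjoint_adjoint_bounded V1.bounded_linear V2.bounded_linear)

lemma image_unitary_part:
  "V1 ` unitary_part (V1 \<circ> V2) = unitary_part (V1 \<circ> V2)"
  "V2 ` unitary_part (V1 \<circ> V2) = unitary_part (V1 \<circ> V2)"
proof -
  have "y \<in> V1 ` unitary_part (V1 \<circ> V2) \<and> y \<in> V2 ` unitary_part (V1 \<circ> V2)"
    if y: "y \<in> unitary_part (V1 \<circ> V2)" for y
  proof -
    obtain w where w: "y = V1 (V2 w)"
      using product.unitary_part_power_mem[OF y, of 1] by auto
    then have "y = V1 (adjoint V1 y)"
      by (simp only: adjoint_cancel)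
    moreover have "y = V2 (adjoint V2 y)"
      using w by (simp only: commute_apply adjoint_cancel)
    moreover have "adjoint V1 y \<in> unitary_part (V1 \<circ> V2)" "adjoint V2 y \<in> unitary_part (V1 \<circ> V2)"
      using unitary_part_reducing(3,4) y by blast+
    ultimately show ?thesis
      by (metis image_eqI)
  qed
  then show "V1 ` unitary_part (V1 \<circ> V2) = unitary_part (V1 \<circ> V2)"
    "V2 ` unitary_part (V1 \<circ> V2) = unitary_part (V1 \<circ> V2)"
    using unitary_part_reducing(1,2) by (meson subset_antisym subsetI)+
qed

lemma ker_adjoint_proj_product_V1:
  "ker_adjoint_proj (V1 \<circ> V2) (V1 y) = V1 (ker_adjoint_proj V2 y)"
  by (simp add: adjoint_product)

lemma ker_adjoint_proj_V2_product:
  "ker_adjoint_proj V2 (ker_adjoint_proj (V1 \<circ> V2) y) = ker_adjoint_proj V2 y"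
  by (simp add: commute_apply)

lemma adjoint_product_adjoint_V2:
  "adjoint (V1 \<circ> V2) (adjoint V2 w) = adjoint V2 (adjoint (V1 \<circ> V2) w)"
  by (simp add: adjoint_product adjoint_commute)

lemma ker_adjoint_proj_product_adjoint_V2:
  "ker_adjoint_proj (V1 \<circ> V2) (adjoint V2 z) =
     adjoint V2 (ker_adjoint_proj (V1 \<circ> V2) z) + V1 (ker_adjoint_proj V2 (adjoint (V1 \<circ> V2) z))"
proof -
  let ?A = "adjoint (V1 \<circ> V2)" and ?Q = "ker_adjoint_proj (V1 \<circ> V2)"
  have Q_add: "?Q (a + b) = ?Q a + ?Q b" for a b
    by (simp add: product.V_adjoint.add product.V.add algebra_simps del: comp_apply)
  have split: "adjoint V2 z = adjoint V2 (?Q z) + V1 (?A z)"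
    by (simp add: adjoint_product commute_apply)
  have "?A (?Q z) = 0"
    by (simp add: product.V_adjoint.diff adjoint_product)
  then have "?Q (adjoint V2 (?Q z)) = adjoint V2 (?Q z)"
    by (simp only: adjoint_product_adjoint_V2 V2_adjoint.zero product.V.zero diff_zero)
  have "?Q (adjoint V2 z) = ?Q (adjoint V2 (?Q z) + V1 (?A z))"
    by (simp only: split[symmetric])
  also have "\<dots> = ?Q (adjoint V2 (?Q z)) + ?Q (V1 (?A z))"
    by (rule Q_add)
  finally show ?thesis
    by (simp only: \<open>?Q (adjoint V2 (?Q z)) = adjoint V2 (?Q z)\<close> ker_adjoint_proj_product_V1)
qed

lemma wold_coeffs_V1:
  "wold_coeffs (V1 \<circ> V2) (V1 x) n =
     V1 (ker_adjoint_proj V2 (wold_coeffs (V1 \<circ> V2) x n)) +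
     (if n = 0 then 0 else adjoint V2 (wold_coeffs (V1 \<circ> V2) x (n - 1)))"
proof (cases n)
  case 0
  then show ?thesis
    using ker_adjoint_proj_product_V1[of x] ker_adjoint_proj_V2_product[of x] by (simp add: wold_coeffs_def)
next
  case (Suc k)
  let ?A = "adjoint (V1 \<circ> V2)"
  define z where "z = (?A ^^ k) x"
  have "(?A ^^ k) (adjoint V2 y) = adjoint V2 ((?A ^^ k) y)" for y
    by (rule funpow_commute_apply) (rule adjoint_product_adjoint_V2)
  then have "(?A ^^ Suc k) (V1 x) = adjoint V2 z"
    by (simp only: z_def funpow_Suc_right comp_apply adjoint_product adjoint_cancel)
  moreover have "(?A ^^ Suc k) x = ?A z"
    by (simp add: z_def)
  ultimately show ?thesis
    using Suc ker_adjoint_proj_product_adjoint_V2[of z] ker_adjoint_proj_V2_product[of "?A z"]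
    by (simp add: wold_coeffs_def z_def add.commute)
qed

lemma wold_coeffs_V2:
  "wold_coeffs (V1 \<circ> V2) (V2 x) n =
     V2 (ker_adjoint_proj V1 (wold_coeffs (V1 \<circ> V2) x n)) +
     (if n = 0 then 0 else adjoint V1 (wold_coeffs (V1 \<circ> V2) x (n - 1)))"
  using commuting_isometries.wold_coeffs_V1[OF swapped] by (simp only: commute)

text \<open>Under the Wold unitary W of V = V1 V2, V1 and V2 become multiplication by
  V1 Q2 + z V2* and V2 Q1 + z V1* on H^2(ker V*) (Qi = I - Vi Vi*, see wold_coeffs_V1/2).
  Matching these with U*(P^perp + z P) and (P + z P^perp) U gives the triple below.\<close>

definition model_proj :: "'a \<Rightarrow> 'a" where
  "model_proj e = V2 (adjoint V2 e)"

definition model_unitary :: "'a \<Rightarrow> 'a" where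
  "model_unitary e = V2 (ker_adjoint_proj V1 e) + adjoint V1 e"

definition model_unitary_inv :: "'a \<Rightarrow> 'a" where
  "model_unitary_inv e = adjoint V2 e + V1 (ker_adjoint_proj V2 e)"

lemma mem_ker_adjoint_product:
  "e \<in> ker_op (adjoint (V1 \<circ> V2)) \<longleftrightarrow> adjoint V2 (adjoint V1 e) = 0"
  "e \<in> ker_op (adjoint (V1 \<circ> V2)) \<longleftrightarrow> adjoint V1 (adjoint V2 e) = 0"
  by (simp_all add: ker_op_def adjoint_product adjoint_commute)

lemma model_maps_ker:
  assumes "e \<in> ker_op (adjoint (V1 \<circ> V2))"
  shows "model_proj e \<in> ker_op (adjoint (V1 \<circ> V2))"
    "model_unitary e \<in> ker_op (adjoint (V1 \<circ> V2))"
    "model_unitary_inv e \<in> ker_op (adjoint (V1 \<circ> V2))"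
proof -
  have e: "adjoint V2 (adjoint V1 e) = 0" "adjoint V1 (adjoint V2 e) = 0"
    using assms mem_ker_adjoint_product by blast+
  show "model_proj e \<in> ker_op (adjoint (V1 \<circ> V2))"
    "model_unitary e \<in> ker_op (adjoint (V1 \<circ> V2))"
    unfolding mem_ker_adjoint_product(2) using e by (simp_all add: model_proj_def model_unitary_def)
  show "model_unitary_inv e \<in> ker_op (adjoint (V1 \<circ> V2))"
    unfolding mem_ker_adjoint_product(1) using e by (simp add: model_unitary_inv_def)
qed

lemma model_unitary_inverse:
  assumes "e \<in> ker_op (adjoint (V1 \<circ> V2))"
  shows "model_unitary_inv (model_unitary e) = e" "model_unitary (model_unitary_inv e) = e"
  using assms mem_ker_adjoint_product[of e]
  by (simp_all add: model_unitary_def model_unitary_inv_def)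

lemma norm_model_unitary:
  assumes "e \<in> ker_op (adjoint (V1 \<circ> V2))"
  shows "norm (model_unitary e) = norm e"
proof -
  have norm_V2: "norm (V2 x) = norm x" for x
    using isometry2 by (simp add: isometry_def)
  have "inner (V2 (ker_adjoint_proj V1 e)) (adjoint V1 e) =
      inner (ker_adjoint_proj V1 e) (adjoint V2 (adjoint V1 e))"
    by (rule adjoint_works(2))
  then have "inner (V2 (ker_adjoint_proj V1 e)) (adjoint V1 e) = 0"
    using assms by (simp add: mem_ker_adjoint_product)
  then have "(norm (model_unitary e))\<^sup>2
      = (norm (V2 (ker_adjoint_proj V1 e)))\<^sup>2 + (norm (adjoint V1 e))\<^sup>2"
    unfolding model_unitary_def by (intro norm_add_Pythagorean) (simp only: orthogonal_def)
  also have "\<dots> = (norm e)\<^sup>2"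
    using hilbert_isometry.norm_split_ker_adjoint_proj[of V1 e] isometry1
    by (simp only: norm_V2 hilbert_isometry_def)
  finally show ?thesis by simp
qed

lemma inv_into_model_unitary:
  assumes "e \<in> ker_op (adjoint (V1 \<circ> V2))"
  shows "inv_into (ker_op (adjoint (V1 \<circ> V2))) model_unitary e = model_unitary_inv e"
proof (rule inv_into_f_eq)
  show "inj_on model_unitary (ker_op (adjoint (V1 \<circ> V2)))"
    by (rule inj_on_inverseI[of _ model_unitary_inv]) (rule model_unitary_inverse(1))
qed (use assms model_maps_ker(3) model_unitary_inverse(2) in auto)

lemma model_symbol_coeffs:
  assumes "e \<in> ker_op (adjoint (V1 \<circ> V2))"
  shows "inv_into (ker_op (adjoint (V1 \<circ> V2))) model_unitary (e - model_proj e) =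
      V1 (ker_adjoint_proj V2 e)"
    "inv_into (ker_op (adjoint (V1 \<circ> V2))) model_unitary (model_proj e) = adjoint V2 e"
    "model_proj (model_unitary e) = V2 (ker_adjoint_proj V1 e)"
    "model_unitary e - V2 (ker_adjoint_proj V1 e) = adjoint V1 e"
    \<comment> \<open>the last identity is U e - P (U e) = V1* e, already rewritten by the third\<close>
proof -
  have e: "adjoint V2 (adjoint V1 e) = 0"
    using assms mem_ker_adjoint_product by blast
  have "e - model_proj e \<in> ker_op (adjoint (V1 \<circ> V2))"
    using assms model_maps_ker(1)[OF assms] by (simp add: ker_op_def product.V_adjoint.diff)
  then show "inv_into (ker_op (adjoint (V1 \<circ> V2))) model_unitary (e - model_proj e) =
      V1 (ker_adjoint_proj V2 e)"
    by (simp add: inv_into_model_unitary model_unitary_inv_def model_proj_def)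
  show "inv_into (ker_op (adjoint (V1 \<circ> V2))) model_unitary (model_proj e) = adjoint V2 e"
    using model_maps_ker(1)[OF assms]
    by (simp add: inv_into_model_unitary model_unitary_inv_def model_proj_def)
  show "model_proj (model_unitary e) = V2 (ker_adjoint_proj V1 e)"
    "model_unitary e - V2 (ker_adjoint_proj V1 e) = adjoint V1 e"
    using e by (simp_all add: model_proj_def model_unitary_def)
qed

lemma proj_on_model_proj: "proj_on (ker_op (adjoint (V1 \<circ> V2))) model_proj"
  unfolding proj_on_def clinear_on_def
proof (intro conjI ballI allI)
  show "model_proj ` ker_op (adjoint (V1 \<circ> V2)) \<subseteq> ker_op (adjoint (V1 \<circ> V2))"
    using model_maps_ker(1) by blast
  show "inner (model_proj x) y = inner x (model_proj y)" for x y
    by (metis model_proj_def adjoint_works(2) inner_commute)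
qed (simp_all add: model_proj_def)

lemma unitary_on_model_unitary: "unitary_on (ker_op (adjoint (V1 \<circ> V2))) model_unitary"
  unfolding unitary_on_def clinear_on_def
proof (intro conjI ballI allI)
  show "model_unitary ` ker_op (adjoint (V1 \<circ> V2)) \<subseteq> ker_op (adjoint (V1 \<circ> V2))"
    using model_maps_ker(2) by blast
  show "model_unitary ` ker_op (adjoint (V1 \<circ> V2)) = ker_op (adjoint (V1 \<circ> V2))"
  proof
    show "ker_op (adjoint (V1 \<circ> V2)) \<subseteq> model_unitary ` ker_op (adjoint (V1 \<circ> V2))"
    proof
      fix e assume e: "e \<in> ker_op (adjoint (V1 \<circ> V2))"
      then have "e = model_unitary (model_unitary_inv e)"
        by (simp add: model_unitary_inverse)
      then show "e \<in> model_unitary ` ker_op (adjoint (V1 \<circ> V2))"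
        using model_maps_ker(3)[OF e] by (rule image_eqI)
    qed
  qed (use model_maps_ker(2) in blast)
  show "norm (model_unitary x) = norm x" if "x \<in> ker_op (adjoint (V1 \<circ> V2))" for x
    using that by (rule norm_model_unitary)
qed (simp_all add: model_unitary_def algebra_simps)

lemma bcl_triple_model:
  "bcl_triple V1 V2 (ker_op (adjoint (V1 \<circ> V2))) model_proj model_unitary"
  unfolding bcl_triple_def
proof (intro conjI csubspace_ker_op[OF product.clinear_ops(2)] proj_on_model_proj
    unitary_on_model_unitary, rule exI[of _ "pure_part (V1 \<circ> V2)"],
    rule exI[of _ "unitary_part (V1 \<circ> V2)"], rule exI[of _ "wold_coeffs (V1 \<circ> V2)"],
    intro conjI)
  show "unitary_to_hardy (pure_part (V1 \<circ> V2)) (ker_op (adjoint (V1 \<circ> V2)))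
      (wold_coeffs (V1 \<circ> V2))"
    by (rule product.unitary_to_hardy_wold_coeffs)
  have coeffs: "wold_coeffs (V1 \<circ> V2) x n \<in> ker_op (adjoint (V1 \<circ> V2))" for x n
    using hardyD(1)[OF product.wold_coeffs_hardy] .
  show "\<forall>x\<in>pure_part (V1 \<circ> V2). wold_coeffs (V1 \<circ> V2) (V1 x) =
      mult_op (\<lambda>e. inv_into (ker_op (adjoint (V1 \<circ> V2))) model_unitary (e - model_proj e))
        (\<lambda>e. inv_into (ker_op (adjoint (V1 \<circ> V2))) model_unitary (model_proj e))
        (wold_coeffs (V1 \<circ> V2) x)"
    by (simp add: fun_eq_iff mult_op_def wold_coeffs_V1 model_symbol_coeffs(1,2)[OF coeffs])
  show "\<forall>x\<in>pure_part (V1 \<circ> V2). wold_coeffs (V1 \<circ> V2) (V2 x) =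
      mult_op (\<lambda>e. model_proj (model_unitary e))
        (\<lambda>e. model_unitary e - model_proj (model_unitary e)) (wold_coeffs (V1 \<circ> V2) x)"
    by (simp only: fun_eq_iff mult_op_def wold_coeffs_V2 model_symbol_coeffs(3,4)[OF coeffs]) simp
qed (use product.csubspace_pure_part
      product.csubspace_unitary_part product.pure_unitary_orthogonal product.pure_unitary_decomp
      pure_part_reducing unitary_part_reducing image_unitary_part in auto)

lemma model_proj_image: "model_proj ` ker_op (adjoint (V1 \<circ> V2)) = V2 ` ker_op (adjoint V1)"
proof
  show "model_proj ` ker_op (adjoint (V1 \<circ> V2)) \<subseteq> V2 ` ker_op (adjoint V1)"
  proof
    fix y assume "y \<in> model_proj ` ker_op (adjoint (V1 \<circ> V2))"
    then obtain e where "e \<in> ker_op (adjoint (V1 \<circ> V2))" "y = V2 (adjoint V2 e)"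
      by (auto simp: model_proj_def)
    then have "adjoint V2 e \<in> ker_op (adjoint V1)" "y = V2 (adjoint V2 e)"
      using mem_ker_adjoint_product(2)[of e] by (auto simp: ker_op_def)
    then show "y \<in> V2 ` ker_op (adjoint V1)" by blast
  qed
  show "V2 ` ker_op (adjoint V1) \<subseteq> model_proj ` ker_op (adjoint (V1 \<circ> V2))"
  proof
    fix y assume "y \<in> V2 ` ker_op (adjoint V1)"
    then obtain k where "k \<in> ker_op (adjoint V1)" "y = V2 k" by blast
    then have "V2 k \<in> ker_op (adjoint (V1 \<circ> V2))" "y = model_proj (V2 k)"
      unfolding mem_ker_adjoint_product(2) by (simp_all add: ker_op_def model_proj_def)
    then show "y \<in> model_proj ` ker_op (adjoint (V1 \<circ> V2))" by blast
  qed
qed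

lemma model_complement_image:
  "(\<lambda>x. x - model_proj x) ` ker_op (adjoint (V1 \<circ> V2)) = ker_op (adjoint V2)"
proof
  show "(\<lambda>x. x - model_proj x) ` ker_op (adjoint (V1 \<circ> V2)) \<subseteq> ker_op (adjoint V2)"
    by (auto simp: model_proj_def ker_op_def)
  show "ker_op (adjoint V2) \<subseteq> (\<lambda>x. x - model_proj x) ` ker_op (adjoint (V1 \<circ> V2))"
  proof
    fix b assume b: "b \<in> ker_op (adjoint V2)"
    then have "b = b - model_proj b"
      by (simp add: model_proj_def ker_op_def)
    moreover have "b \<in> ker_op (adjoint (V1 \<circ> V2))"
      using b commuting_isometries.ker_adjoint_subset[OF swapped] by (auto simp: commute)
    ultimately show "b \<in> (\<lambda>x. x - model_proj x) ` ker_op (adjoint (V1 \<circ> V2))"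
      by (rule image_eqI)
  qed
qed

lemma images_eq_if_model_unitary_image:
  assumes "model_unitary ` model_proj ` ker_op (adjoint (V1 \<circ> V2)) =
      (\<lambda>x. x - model_proj x) ` ker_op (adjoint (V1 \<circ> V2))"
  shows "V1 ` ker_op (adjoint V2) = V2 ` ker_op (adjoint V1)"
proof -
  let ?E = "ker_op (adjoint (V1 \<circ> V2))"
  have "model_proj ` ?E \<subseteq> ?E"
    using model_maps_ker(1) by blast
  then have "model_proj ` ?E = model_unitary_inv ` model_unitary ` model_proj ` ?E"
    by (force simp: image_image model_unitary_inverse(1) cong: image_cong)
  also have "\<dots> = model_unitary_inv ` ker_op (adjoint V2)"
    by (simp only: assms model_complement_image)
  also have "\<dots> = V1 ` ker_op (adjoint V2)"
    by (auto simp: model_unitary_inv_def ker_op_def intro!: image_cong)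
  finally show ?thesis
    by (simp add: model_proj_image)
qed

lemma range_eq_iff_fringes_zero:
  "range V1 = range V2 \<longleftrightarrow>
     (\<forall>x\<in>ker_op (adjoint V1). fringe1 V1 V2 x = 0) \<and>
     (\<forall>x\<in>ker_op (adjoint V2). fringe2 V1 V2 x = 0)"
  using fringe1_zero_iff commuting_isometries.fringe1_zero_iff[OF swapped]
  by (auto simp: fringe2_eq_fringe1_swap)

lemma range_eq_iff_defect_difference_of_projections:
  "range V1 = range V2 \<longleftrightarrow>
     (\<exists>P1 P2. is_projection P1 \<and> is_projection P2 \<and> (\<forall>x. P1 (P2 x) = 0) \<and>
        defect_op V1 V2 = (\<lambda>x. P1 x - P2 x) \<and>
        {a + b | a b. a \<in> range P1 \<and> b \<in> range P2} = ker_op (adjoint (V1 \<circ> V2)))"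
  using defect_op_difference_of_projections range_eq_if_defect_difference_of_projections
  by blast

lemma range_eq_iff_bcl_unitary_image:
  "range V1 = range V2 \<longleftrightarrow>
     (\<forall>E P U. bcl_triple V1 V2 E P U \<longrightarrow> U ` (P ` E) = (\<lambda>x. x - P x) ` E)"
proof
  assume "range V1 = range V2"
  then show "\<forall>E P U. bcl_triple V1 V2 E P U \<longrightarrow> U ` (P ` E) = (\<lambda>x. x - P x) ` E"
    using bcl_triple_unitary_image_if_range_eq isometry1 isometry2 by blast
next
  assume "\<forall>E P U. bcl_triple V1 V2 E P U \<longrightarrow> U ` (P ` E) = (\<lambda>x. x - P x) ` E"
  then have "model_unitary ` model_proj ` ker_op (adjoint (V1 \<circ> V2)) =
      (\<lambda>x. x - model_proj x) ` ker_op (adjoint (V1 \<circ> V2))"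
    using bcl_triple_model by blast
  then show "range V1 = range V2"
    using images_eq_if_model_unitary_image range_eq_iff_images_eq by blast
qed

end

theorem theorem5p3:
  fixes V1 V2 :: "'a::complex_hilbert \<Rightarrow> 'a"
  assumes iso1: "isometry V1" and iso2: "isometry V2"
    and comm: "V1 \<circ> V2 = V2 \<circ> V1"
  defines "V \<equiv> V1 \<circ> V2"
  shows
    "(range V1 = range V2 \<longleftrightarrow>
        V1 ` ker_op (adjoint V2) = V2 ` ker_op (adjoint V1))
   \<and> (range V1 = range V2 \<longleftrightarrow>
        (\<exists>P1 P2. is_projection P1 \<and> is_projection P2 \<and> (\<forall>x. P1 (P2 x) = 0) \<and>
           defect_op V1 V2 = (\<lambda>x. P1 x - P2 x) \<and>
           {a + b | a b. a \<in> range P1 \<and> b \<in> range P2} = ker_op (adjoint V)))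
   \<and> (range V1 = range V2 \<longleftrightarrow>
        (\<forall>x\<in>ker_op (adjoint V1). fringe1 V1 V2 x = 0) \<and>
        (\<forall>x\<in>ker_op (adjoint V2). fringe2 V1 V2 x = 0))
   \<and> (range V1 = range V2 \<longleftrightarrow>
        (\<forall>E P U. bcl_triple V1 V2 E P U \<longrightarrow> U ` (P ` E) = (\<lambda>x. x - P x) ` E))"
proof -
  interpret commuting_isometries V1 V2
    using iso1 iso2 comm by unfold_locales
  show ?thesis
    unfolding V_def
    using range_eq_iff_images_eq range_eq_iff_defect_difference_of_projections
      range_eq_iff_fringes_zero range_eq_iff_bcl_unitary_image
    by blast
qed

end
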